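(* There exist universal constants $C,C'>0$ such that the following holds. Let $0<\varepsilon<1$, $d,\lambda,k\in\mathbb{N}$ with $k\ge2$, $t=\lceil C\varepsilon^{-2}(\lambda\log(2/\varepsilon)+\log k)\rceil$, and let $G\in\mathbb{R}^{t\times d}$ be a Gaussian JL map. Then for every finite set $P\subset\mathbb{R}^d$ with $|P|\ge k$ and $\operatorname{ddim}(P)=\lambda$, with probability at least $2/3$, the following holds for every diversity measure $\operatorname{div}$ satisfying Property (P): letting $\pi(Q)=\max_{S\subseteq Q,|S|=k}\operatorname{div}(S)$, every $k$-subset $S\subseteq P$ with $\operatorname{div}(G(S))\ge\pi(G(P))/(1+\varepsilon)$ satisfies $\operatorname{div}(S)\ge\pi(P)/(1+C'\varepsilon)$.
   Context: Norms are Euclidean. A Gaussian JL map is a random $t\times d$ matrix with i.i.d. $\mathcal{N}(0,1/t)$ entries; $G(S)=\{Gs:s\in S\}$. The doubling dimension $\operatorname{ddim}(X)$ of $X\subset\mathbb{R}^d$ is the smallest $\lambda$ such that for every ball $B$ of radius $r$, $X\cap B$ can be covered by $2^\lambda$ balls of radius $r/2$. Property (P): there is a number $l\ge1$ such that for every $k$-point set $S$ there is a nonempty family $\mathcal{F}(S)$ of graphs on vertex set $S$, each having exactly $l$ edges (the family being defined combinatorially, i.e. transported along bijections of point sets), and $\operatorname{div}(S)$ equals either $\min_{H\in\mathcal{F}(S)}\sum_{\{x,y\}\in E(H)}\|x-y\|$ for all $S$, or $\max_{H\in\mathcal{F}(S)}\sum_{\{x,y\}\in E(H)}\|x-y\|$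 for all $S$. *)

theory Defs
  imports "HOL-Probability.Probability"
begin

text \<open>Points of R^d are represented as real lists of length d (the dimension d
varies inside the statement). Euclidean distance:\<close>

definition ldist :: "real list \<Rightarrow> real list \<Rightarrow> real" where
  "ldist x y = sqrt (\<Sum>i<length x. (x ! i - y ! i)\<^sup>2)"

definition lcball :: "real list \<Rightarrow> real \<Rightarrow> real list set" where
  "lcball c r = {x. length x = length c \<and> ldist c x \<le> r}"

definition ddim :: "nat \<Rightarrow> real list set \<Rightarrow> nat" where
  "ddim d X = (LEAST lam. \<forall>c r. length c = d \<and> r > 0 \<longrightarrow>
      (\<exists>Cs. finite Cs \<and> card Cs \<le> 2 ^ lam \<and> Cs \<subseteq> {x. length x = d} \<and>
             X \<inter> lcball c r \<subseteq> (\<Union>c'\<in>Cs. lcball c' (r / 2))))"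

text \<open>Gaussian JL map: t x d matrix with iid N(0,1/t) entries (standard deviation 1/sqrt t).\<close>

definition gauss_jl :: "nat \<Rightarrow> nat \<Rightarrow> (nat \<times> nat \<Rightarrow> real) measure" where
  "gauss_jl t d = PiM ({..<t} \<times> {..<d}) (\<lambda>_. density lborel (normal_density 0 (1 / sqrt (real t))))"

definition jl_apply :: "nat \<Rightarrow> nat \<Rightarrow> (nat \<times> nat \<Rightarrow> real) \<Rightarrow> real list \<Rightarrow> real list" where
  "jl_apply t d G x = map (\<lambda>i. \<Sum>j<d. G (i, j) * x ! j) [0..<t]"

text \<open>A graph on vertex set S: a set of 2-element subsets of S. Its total edge length
(each unordered edge counted once = half the sum over ordered pairs).\<close>

definition graph_weight :: "real list set set \<Rightarrow> real" where
  "graph_weight H = (\<Sum>p\<in>{(x, y). {x, y} \<in> H}. ldist (fst p) (snd p)) / 2"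

definition property_P :: "nat \<Rightarrow> nat \<Rightarrow> (real list set \<Rightarrow> real list set set set) \<Rightarrow> bool" where
  "property_P k l F \<longleftrightarrow> l \<ge> 1 \<and>
     (\<forall>S. finite S \<and> card S = k \<longrightarrow>
        F S \<noteq> {} \<and> (\<forall>H\<in>F S. H \<subseteq> {e. e \<subseteq> S \<and> card e = 2} \<and> card H = l)) \<and>
     (\<forall>S S' \<sigma>. finite S \<and> card S = k \<and> bij_betw \<sigma> S S' \<longrightarrow>
        F S' = (\<lambda>H. (\<lambda>e. \<sigma> ` e) ` H) ` F S)"

definition div_val :: "bool \<Rightarrow> (real list set \<Rightarrow> real list set set set) \<Rightarrow> real list set \<Rightarrow> real" where
  "div_val mx F S = (if mx then Max (graph_weight ` F S) else Min (graph_weight ` F S))"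

definition div_opt :: "nat \<Rightarrow> bool \<Rightarrow> (real list set \<Rightarrow> real list set set set) \<Rightarrow> real list set \<Rightarrow> real" where
  "div_opt k mx F Q = Max {div_val mx F S | S. S \<subseteq> Q \<and> card S = k}"

end

theory Submission
  imports Defs
begin

section \<open>Euclidean distance of coordinate lists\<close>

lemma ldist_eq_L2_set: "ldist x y = L2_set (\<lambda>i. x ! i - y ! i) {..<length x}"
  unfolding ldist_def L2_set_def by simp

lemma ldist_nonneg [simp]: "0 \<le> ldist x y"
  unfolding ldist_def by (simp add: sum_nonneg)

lemma ldist_self [simp]: "ldist x x = 0"
  unfolding ldist_def by simp

lemma ldist_commute: "length x = length y \<Longrightarrow> ldist x y = ldist y x"
  unfolding ldist_def by (simp add: power2_commute)

lemma ldist_triangle: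
  assumes "length x = length y" "length y = length z"
  shows "ldist x z \<le> ldist x y + ldist y z"
proof -
  have "ldist x z = L2_set (\<lambda>i. (x ! i - y ! i) + (y ! i - z ! i)) {..<length x}"
    unfolding ldist_eq_L2_set by simp
  also have "\<dots> \<le> L2_set (\<lambda>i. x ! i - y ! i) {..<length x} + L2_set (\<lambda>i. y ! i - z ! i) {..<length x}"
    by (rule L2_set_triangle_ineq)
  also have "\<dots> = ldist x y + ldist y z"
    unfolding ldist_eq_L2_set using assms by simp
  finally show ?thesis .
qed

lemma ldist_eq_0_iff: "length x = length y \<Longrightarrow> ldist x y = 0 \<longleftrightarrow> x = y"
  unfolding ldist_eq_L2_set by (auto simp: L2_set_eq_0_iff intro: nth_equalityI)

lemma ldist_pos: "length x = length y \<Longrightarrow> x \<noteq> y \<Longrightarrow> 0 < ldist x y"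
  using ldist_eq_0_iff ldist_nonneg by (metis order_le_less)


section \<open>Concentration for the Gaussian JL map\<close>

definition jl_coord :: "nat \<Rightarrow> (nat \<times> nat \<Rightarrow> real) \<Rightarrow> (nat \<Rightarrow> real) \<Rightarrow> nat \<Rightarrow> real" where
  "jl_coord d G v i = (\<Sum>j<d. G (i, j) * v j)"

lemma length_jl_apply [simp]: "length (jl_apply t d G x) = t"
  unfolding jl_apply_def by simp

lemma ldist_jl_apply:
  "ldist (jl_apply t d G x) (jl_apply t d G y) = sqrt (\<Sum>i<t. (jl_coord d G (\<lambda>j. x ! j - y ! j) i)\<^sup>2)"
  unfolding ldist_def jl_apply_def jl_coord_def by (simp add: sum_subtractf right_diff_distrib)

lemma prob_space_gauss_jl: "0 < t \<Longrightarrow> prob_space (gauss_jl t d)"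
  unfolding gauss_jl_def by (intro prob_space_PiM prob_space_normal_density) auto

lemma space_gauss_jl: "space (gauss_jl t d) = ({..<t} \<times> {..<d}) \<rightarrow>\<^sub>E UNIV"
  unfolding gauss_jl_def by (simp add: space_PiM)

lemma measurable_gauss_jl_entry [measurable]: "(\<lambda>G. G c) \<in> borel_measurable (gauss_jl t d)"
proof (cases "c \<in> {..<t} \<times> {..<d}")
  case True
  then show ?thesis unfolding gauss_jl_def by measurable
next
  case False
  \<comment> \<open>outside the index set every entry is the junk value undefined\<close>
  have "(\<lambda>G. undefined) \<in> borel_measurable (gauss_jl t d)" by simp
  then show ?thesis
    by (rule measurable_cong[THEN iffD1, rotated])
       (use False in \<open>cases c; auto simp: space_gauss_jl PiE_def extensional_def\<close>)
qed

lemma measurable_ldist_jl_apply [measurable]: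
  "(\<lambda>G. ldist (jl_apply t d G x) (jl_apply t d G y)) \<in> borel_measurable (gauss_jl t d)"
  unfolding ldist_jl_apply jl_coord_def by measurable

lemma distr_gauss_jl_entry:
  assumes "0 < t" "c \<in> {..<t} \<times> {..<d}" and M: "sets M = sets borel"
  shows "distr (gauss_jl t d) M (\<lambda>G. G c) = density lborel (normal_density 0 (1 / sqrt (real t)))"
proof -
  let ?N = "density lborel (normal_density 0 (1 / sqrt (real t)))"
  have "distr (gauss_jl t d) M (\<lambda>G. G c) = distr (gauss_jl t d) ?N (\<lambda>G. G c)"
    using M by (intro distr_cong) auto
  also have "\<dots> = ?N"
    unfolding gauss_jl_def using assms by (intro distr_PiM_component prob_space_normal_density) auto
  finally show ?thesis .
qed

lemma indep_vars_gauss_jl_entries: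
  assumes "0 < t"
  shows "prob_space.indep_vars (gauss_jl t d) (\<lambda>_. borel) (\<lambda>c G. G c) ({..<t} \<times> {..<d})"
proof -
  interpret prob_space "gauss_jl t d" using prob_space_gauss_jl[OF assms] .
  let ?I = "{..<t} \<times> {..<d}"
  show ?thesis
  proof (cases "?I = {}")
    case True
    then show ?thesis by (simp only: True) (simp add: indep_vars_def indep_sets_def)
  next
    case False
    have "distr (gauss_jl t d) (\<Pi>\<^sub>M c\<in>?I. borel) (\<lambda>G. \<lambda>c\<in>?I. G c) = distr (gauss_jl t d) (gauss_jl t d) (\<lambda>G. G)"
      by (rule distr_cong)
         (auto simp: gauss_jl_def space_PiM PiE_def extensional_def restrict_def fun_eq_iff intro!: sets_PiM_cong)
    also have "\<dots> = gauss_jl t d" by (rule distr_id)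
    also have "\<dots> = (\<Pi>\<^sub>M c\<in>?I. distr (gauss_jl t d) borel (\<lambda>G. G c))"
      unfolding gauss_jl_def by (intro PiM_cong refl distr_gauss_jl_entry[unfolded gauss_jl_def, symmetric] assms) auto
    finally show ?thesis
      by (subst indep_vars_iff_distr_eq_PiM'[OF False]) auto
  qed
qed

lemma indep_vars_gauss_jl_blocks:
  assumes "0 < t" "\<And>j. j \<in> L \<Longrightarrow> K j \<subseteq> {..<t} \<times> {..<d}" "disjoint_family_on K L"
    "\<And>j. j \<in> L \<Longrightarrow> f j \<in> borel_measurable (Pi\<^sub>M (K j) (\<lambda>_. borel))"
  shows "prob_space.indep_vars (gauss_jl t d) (\<lambda>_. borel) (\<lambda>j G. f j (restrict G (K j))) L"
proof -
  interpret prob_space "gauss_jl t d" using prob_space_gauss_jl[OF assms(1)] .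
  have "indep_vars (\<lambda>j. Pi\<^sub>M (K j) (\<lambda>_. borel)) (\<lambda>j G. restrict (\<lambda>c. G c) (K j)) L"
    by (rule indep_vars_restrict[OF indep_vars_gauss_jl_entries[OF assms(1)] assms(2,3)])
  from indep_vars_compose2[OF this assms(4)] show ?thesis by simp
qed

lemma distributed_jl_coord:
  assumes t: "0 < t" and i: "i < t" and v: "0 < (\<Sum>j<d. (v j)\<^sup>2)"
  shows "distributed (gauss_jl t d) lborel (\<lambda>G. jl_coord d G v i)
           (normal_density 0 (sqrt (\<Sum>j<d. (v j)\<^sup>2) / sqrt (real t)))"
proof -
  interpret prob_space "gauss_jl t d" using prob_space_gauss_jl[OF t] .
  define J where "J = {j. j < d \<and> v j \<noteq> 0}"
  define \<sigma> where "\<sigma> = 1 / sqrt (real t)"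
  have \<sigma>: "0 < \<sigma>" using t by (simp add: \<sigma>_def)
  have J: "J \<noteq> {}" using v by (auto simp: J_def intro: ccontr)
  have coord: "jl_coord d G v i = (\<Sum>j\<in>J. v j * G (i, j))" for G
    unfolding jl_coord_def J_def by (rule sum.mono_neutral_cong_right) auto
  have "indep_vars (\<lambda>_. borel) (\<lambda>j G. (\<lambda>h. v j * h (i, j)) (restrict G {(i, j)})) J"
    by (rule indep_vars_gauss_jl_blocks[OF t]) (auto simp: J_def i disjoint_family_on_def)
  then have indep: "indep_vars (\<lambda>_. borel) (\<lambda>j G. v j * G (i, j)) J"
    by simp
  have entry: "distributed (gauss_jl t d) lborel (\<lambda>G. G (i, j)) (normal_density 0 \<sigma>)" if "j \<in> J" for j
    using distr_gauss_jl_entry[OF t, of "(i, j)" d lborel] that i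
    unfolding distributed_def \<sigma>_def by (auto simp: J_def)
  have "distributed (gauss_jl t d) lborel (\<lambda>G. \<Sum>j\<in>J. v j * G (i, j))
          (normal_density (\<Sum>j\<in>J. 0) (sqrt (\<Sum>j\<in>J. (\<bar>v j\<bar> * \<sigma>)\<^sup>2)))"
    using \<sigma> by (intro sum_indep_normal[OF _ J indep] normal_density_affine[OF entry, of _ _ 0, simplified])
               (auto simp: J_def)
  moreover have "(\<Sum>j\<in>J. (\<bar>v j\<bar> * \<sigma>)\<^sup>2) = (\<Sum>j<d. (v j)\<^sup>2) * \<sigma>\<^sup>2"
    unfolding sum_distrib_right power_mult_distrib power2_abs J_def
    by (rule sum.mono_neutral_cong_left) auto
  ultimately show ?thesis
    using \<sigma> by (simp add: coord real_sqrt_mult \<sigma>_def)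
qed

lemma nn_integral_normal_density_exp_square:
  assumes s: "0 < s" and \<theta>: "2 * \<theta> * s\<^sup>2 < 1"
  shows "(\<integral>\<^sup>+x. ennreal (normal_density 0 s x) * ennreal (exp (\<theta> * x\<^sup>2)) \<partial>lborel)
         = ennreal (1 / sqrt (1 - 2 * \<theta> * s\<^sup>2))"
proof -
  define a where "a = 1 - 2 * \<theta> * s\<^sup>2"
  define s' where "s' = s / sqrt a"
  have a: "0 < a" using \<theta> by (simp add: a_def)
  have s': "0 < s'" using s a by (simp add: s'_def)
  \<comment> \<open>the weight exp (\<theta> x^2) turns N(0,s^2) into a multiple of N(0,s^2/a)\<close>
  have density: "normal_density 0 s x * exp (\<theta> * x\<^sup>2) = (1 / sqrt a) * normal_density 0 s' x" for x
  proof -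
    have "- x\<^sup>2 / (2 * s\<^sup>2) + \<theta> * x\<^sup>2 = - x\<^sup>2 / (2 * s'\<^sup>2)"
      using s a by (simp add: s'_def a_def power_divide field_simps)
    then have "exp (- x\<^sup>2 / (2 * s\<^sup>2)) * exp (\<theta> * x\<^sup>2) = exp (- x\<^sup>2 / (2 * s'\<^sup>2))"
      by (simp only: mult_exp_exp)
    moreover have "1 / sqrt (2 * pi * s\<^sup>2) = (1 / sqrt a) * (1 / sqrt (2 * pi * s'\<^sup>2))"
      using s a by (simp add: s'_def power_divide real_sqrt_mult real_sqrt_divide field_simps)
    ultimately show ?thesis
      unfolding normal_density_def by (simp add: mult.assoc)
  qed
  have "(\<integral>\<^sup>+x. ennreal (normal_density 0 s x) * ennreal (exp (\<theta> * x\<^sup>2)) \<partial>lborel)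
       = (\<integral>\<^sup>+x. ennreal (1 / sqrt a) * ennreal (normal_density 0 s' x) \<partial>lborel)"
    using a by (intro nn_integral_cong) (simp add: ennreal_mult[symmetric] density)
  also have "\<dots> = ennreal (1 / sqrt a) * (\<integral>\<^sup>+x. ennreal (normal_density 0 s' x) \<partial>lborel)"
    by (rule nn_integral_cmult) simp
  also have "(\<integral>\<^sup>+x. ennreal (normal_density 0 s' x) \<partial>lborel) = 1"
    using s' by (subst nn_integral_eq_integral)
                (auto simp: integrable_normal_density integral_normal_density)
  finally show ?thesis by (simp add: a_def)
qed

lemma nn_integral_exp_jl_norm_sq:
  assumes t: "0 < t" and v: "0 < (\<Sum>j<d. (v j)\<^sup>2)"
    and \<theta>: "2 * \<theta> * ((\<Sum>j<d. (v j)\<^sup>2) / real t) < 1"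
  shows "(\<integral>\<^sup>+G. ennreal (exp (\<theta> * (\<Sum>i<t. (jl_coord d G v i)\<^sup>2))) \<partial>gauss_jl t d)
         = ennreal ((1 / sqrt (1 - 2 * \<theta> * ((\<Sum>j<d. (v j)\<^sup>2) / real t))) ^ t)"
proof -
  interpret prob_space "gauss_jl t d" using prob_space_gauss_jl[OF t] .
  define s where "s = sqrt (\<Sum>j<d. (v j)\<^sup>2) / sqrt (real t)"
  have s: "0 < s" "s\<^sup>2 = (\<Sum>j<d. (v j)\<^sup>2) / real t"
    using v t by (simp_all add: s_def power_divide)
  have "indep_vars (\<lambda>_. borel)
          (\<lambda>i G. (\<lambda>h. exp (\<theta> * (\<Sum>j<d. h (i, j) * v j)\<^sup>2)) (restrict G ({i} \<times> {..<d}))) {..<t}"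
    by (rule indep_vars_gauss_jl_blocks[OF t]) (auto simp: disjoint_family_on_def)
  then have "indep_vars (\<lambda>_. borel) (\<lambda>i G. exp (\<theta> * (jl_coord d G v i)\<^sup>2)) {..<t}"
    by (simp add: jl_coord_def)
  from indep_vars_compose2[OF this, of "\<lambda>i x. ennreal x" "\<lambda>_. borel"]
  have indep: "indep_vars (\<lambda>_. borel) (\<lambda>i G. ennreal (exp (\<theta> * (jl_coord d G v i)\<^sup>2))) {..<t}"
    by simp
  have factor: "(\<integral>\<^sup>+G. ennreal (exp (\<theta> * (jl_coord d G v i)\<^sup>2)) \<partial>gauss_jl t d)
                = ennreal (1 / sqrt (1 - 2 * \<theta> * s\<^sup>2))" if "i < t" for i
  proof -
    have "distributed (gauss_jl t d) lborel (\<lambda>G. jl_coord d G v i) (normal_density 0 s)"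
      using distributed_jl_coord[OF t that v] by (simp add: s_def)
    then have "(\<integral>\<^sup>+G. ennreal (exp (\<theta> * (jl_coord d G v i)\<^sup>2)) \<partial>gauss_jl t d)
          = (\<integral>\<^sup>+x. ennreal (normal_density 0 s x) * ennreal (exp (\<theta> * x\<^sup>2)) \<partial>lborel)"
      by (rule distributed_nn_integral[symmetric]) simp
    also have "\<dots> = ennreal (1 / sqrt (1 - 2 * \<theta> * s\<^sup>2))"
      using \<theta> s by (intro nn_integral_normal_density_exp_square) auto
    finally show ?thesis .
  qed
  have "(\<integral>\<^sup>+G. ennreal (exp (\<theta> * (\<Sum>i<t. (jl_coord d G v i)\<^sup>2))) \<partial>gauss_jl t d)
        = (\<integral>\<^sup>+G. (\<Prod>i<t. ennreal (exp (\<theta> * (jl_coord d G v i)\<^sup>2))) \<partial>gauss_jl t d)"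
    by (simp add: sum_distrib_left exp_sum prod_ennreal)
  also have "\<dots> = (\<Prod>i<t. \<integral>\<^sup>+G. ennreal (exp (\<theta> * (jl_coord d G v i)\<^sup>2)) \<partial>gauss_jl t d)"
    by (rule indep_vars_nn_integral[OF _ indep]) auto
  also have "\<dots> = ennreal ((1 / sqrt (1 - 2 * \<theta> * s\<^sup>2)) ^ t)"
    using \<theta> s by (simp add: factor ennreal_power)
  finally show ?thesis by (simp add: s)
qed

lemma chernoff_chi_square_exponent:
  assumes t: "0 < t" and v: "0 < v" and a: "0 < a"
  defines "\<theta> \<equiv> real t * (1 - 1 / a) / (2 * v)"
  shows "exp (- (\<theta> * (a * v))) * (1 / sqrt (1 - 2 * \<theta> * (v / real t))) ^ t
       = exp (- (real t / 2) * (a - 1 - ln a))"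
proof -
  have e1: "\<theta> * (a * v) = real t * (a - 1) / 2"
    using v a by (simp add: \<theta>_def field_simps)
  have e2: "1 - 2 * \<theta> * (v / real t) = 1 / a"
    using v a t by (simp add: \<theta>_def field_simps)
  have "1 / sqrt (1 / a) = exp (ln a / 2)"
    using a by (simp add: real_sqrt_divide powr_half_sqrt[symmetric] powr_def)
  then have e3: "(1 / sqrt (1 / a)) ^ t = exp (real t * (ln a / 2))"
    by (simp only: exp_of_nat_mult)
  show ?thesis
    unfolding e1 e2 e3 mult_exp_exp[symmetric]
    by (simp add: exp_add[symmetric] algebra_simps add_divide_distrib diff_divide_distrib)
qed

lemma jl_norm_sq_upper_tail:
  assumes t: "0 < t" and v: "0 < (\<Sum>j<d. (v j)\<^sup>2)" and a: "1 < a"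
  shows "measure (gauss_jl t d) {G \<in> space (gauss_jl t d). a * (\<Sum>j<d. (v j)\<^sup>2) \<le> (\<Sum>i<t. (jl_coord d G v i)\<^sup>2)}
         \<le> exp (- (real t / 2) * (a - 1 - ln a))"
proof -
  interpret prob_space "gauss_jl t d" using prob_space_gauss_jl[OF t] .
  define nv where "nv = (\<Sum>j<d. (v j)\<^sup>2)"
  define \<theta> where "\<theta> = real t * (1 - 1 / a) / (2 * nv)"
  let ?Y = "\<lambda>G. \<Sum>i<t. (jl_coord d G v i)\<^sup>2"
  have nv: "0 < nv" using v by (simp add: nv_def)
  have \<theta>: "0 < \<theta>" "2 * \<theta> * (nv / real t) < 1"
    using t a nv by (simp_all add: \<theta>_def field_simps)
  have "emeasure (gauss_jl t d) {G \<in> space (gauss_jl t d). a * nv \<le> ?Y G}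
        \<le> ennreal (exp (- \<theta> * (a * nv))) * (\<integral>\<^sup>+G. ennreal (exp (\<theta> * ?Y G)) * indicator (space (gauss_jl t d)) G \<partial>gauss_jl t d)"
    by (rule Chernoff_ineq_nn_integral_ge[OF \<theta>(1)]) (auto simp: jl_coord_def)
  also have "(\<integral>\<^sup>+G. ennreal (exp (\<theta> * ?Y G)) * indicator (space (gauss_jl t d)) G \<partial>gauss_jl t d)
           = ennreal ((1 / sqrt (1 - 2 * \<theta> * (nv / real t))) ^ t)"
    using nn_integral_exp_jl_norm_sq[OF t v, of \<theta>] \<theta>
    by (subst nn_integral_cong[of _ _ "\<lambda>G. ennreal (exp (\<theta> * ?Y G))"]) (simp_all add: nv_def)
  also have "ennreal (exp (- \<theta> * (a * nv))) * \<dots> = ennreal (exp (- (real t / 2) * (a - 1 - ln a)))"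
    using chernoff_chi_square_exponent[OF t nv, of a] a by (simp add: \<theta>_def ennreal_mult[symmetric])
  finally show ?thesis by (simp add: emeasure_eq_measure nv_def)
qed

lemma jl_norm_sq_lower_tail:
  assumes t: "0 < t" and v: "0 < (\<Sum>j<d. (v j)\<^sup>2)" and a: "0 < a" "a < 1"
  shows "measure (gauss_jl t d) {G \<in> space (gauss_jl t d). (\<Sum>i<t. (jl_coord d G v i)\<^sup>2) \<le> a * (\<Sum>j<d. (v j)\<^sup>2)}
         \<le> exp (- (real t / 2) * (a - 1 - ln a))"
proof -
  interpret prob_space "gauss_jl t d" using prob_space_gauss_jl[OF t] .
  define nv where "nv = (\<Sum>j<d. (v j)\<^sup>2)"
  define \<theta> where "\<theta> = real t * (1 - 1 / a) / (2 * nv)"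
  let ?Y = "\<lambda>G. \<Sum>i<t. (jl_coord d G v i)\<^sup>2"
  have nv: "0 < nv" using v by (simp add: nv_def)
  have \<theta>: "0 < - \<theta>" "2 * \<theta> * (nv / real t) < 1"
    using t a nv by (simp_all add: \<theta>_def field_simps)
  have "emeasure (gauss_jl t d) {G \<in> space (gauss_jl t d). ?Y G \<le> a * nv}
        \<le> ennreal (exp ((- \<theta>) * (a * nv))) * (\<integral>\<^sup>+G. ennreal (exp (- (- \<theta>) * ?Y G)) * indicator (space (gauss_jl t d)) G \<partial>gauss_jl t d)"
    by (rule Chernoff_ineq_nn_integral_le[OF \<theta>(1)]) (auto simp: jl_coord_def)
  also have "(\<integral>\<^sup>+G. ennreal (exp (- (- \<theta>) * ?Y G)) * indicator (space (gauss_jl t d)) G \<partial>gauss_jl t d)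
           = ennreal ((1 / sqrt (1 - 2 * \<theta> * (nv / real t))) ^ t)"
    using nn_integral_exp_jl_norm_sq[OF t v, of \<theta>] \<theta>
    by (subst nn_integral_cong[of _ _ "\<lambda>G. ennreal (exp (\<theta> * ?Y G))"]) (simp_all add: nv_def)
  also have "ennreal (exp ((- \<theta>) * (a * nv))) * \<dots> = ennreal (exp (- (real t / 2) * (a - 1 - ln a)))"
    using chernoff_chi_square_exponent[OF t nv, of a] a by (simp add: \<theta>_def ennreal_mult[symmetric])
  finally show ?thesis by (simp add: emeasure_eq_measure nv_def)
qed

lemma sq_sub_one_le_chernoff_rate: "0 < (s::real) \<Longrightarrow> (s - 1)\<^sup>2 \<le> s\<^sup>2 - 1 - ln (s\<^sup>2)"
proof -
  assume s: "0 < s"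
  have "ln s \<le> s - 1" using s by (rule ln_le_minus_one)
  moreover have "ln (s\<^sup>2) = 2 * ln s" using s by (simp add: ln_realpow)
  ultimately show ?thesis by (simp add: power2_eq_square algebra_simps)
qed

lemma sum_sq_diff_pos:
  "length (x::real list) = d \<Longrightarrow> length y = d \<Longrightarrow> x \<noteq> y \<Longrightarrow> 0 < (\<Sum>j<d. (x ! j - y ! j)\<^sup>2)"
  using ldist_pos[of x y] by (simp add: ldist_def)

lemma scaled_ldist_eq_sqrt:
  "0 \<le> s \<Longrightarrow> length x = d \<Longrightarrow> s * ldist x y = sqrt (s\<^sup>2 * (\<Sum>j<d. (x ! j - y ! j)\<^sup>2))"
  by (simp add: ldist_def real_sqrt_mult)

lemma jl_stretch_prob:
  assumes t: "0 < t" and xy: "length x = d" "length y = d" "x \<noteq> y" and s: "1 < s"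
  shows "measure (gauss_jl t d)
           {G \<in> space (gauss_jl t d). s * ldist x y \<le> ldist (jl_apply t d G x) (jl_apply t d G y)}
         \<le> exp (- (real t / 2) * (s - 1)\<^sup>2)"
proof -
  let ?v = "\<lambda>j. x ! j - y ! j"
  have "{G \<in> space (gauss_jl t d). s * ldist x y \<le> ldist (jl_apply t d G x) (jl_apply t d G y)}
      = {G \<in> space (gauss_jl t d). s\<^sup>2 * (\<Sum>j<d. (?v j)\<^sup>2) \<le> (\<Sum>i<t. (jl_coord d G ?v i)\<^sup>2)}"
    using s xy by (simp add: scaled_ldist_eq_sqrt ldist_jl_apply)
  also have "measure (gauss_jl t d) \<dots> \<le> exp (- (real t / 2) * (s\<^sup>2 - 1 - ln (s\<^sup>2)))"
    using s by (intro jl_norm_sq_upper_tail t sum_sq_diff_pos xy) (simp add: one_less_power)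
  also have "\<dots> \<le> exp (- (real t / 2) * (s - 1)\<^sup>2)"
    using sq_sub_one_le_chernoff_rate[of s] s by (simp add: mult_left_mono)
  finally show ?thesis .
qed

lemma jl_shrink_prob:
  assumes t: "0 < t" and xy: "length x = d" "length y = d" "x \<noteq> y" and s: "0 < s" "s < 1"
  shows "measure (gauss_jl t d)
           {G \<in> space (gauss_jl t d). ldist (jl_apply t d G x) (jl_apply t d G y) \<le> s * ldist x y}
         \<le> exp (- (real t / 2) * (s - 1)\<^sup>2)"
proof -
  let ?v = "\<lambda>j. x ! j - y ! j"
  have "{G \<in> space (gauss_jl t d). ldist (jl_apply t d G x) (jl_apply t d G y) \<le> s * ldist x y}
      = {G \<in> space (gauss_jl t d). (\<Sum>i<t. (jl_coord d G ?v i)\<^sup>2) \<le> s\<^sup>2 * (\<Sum>j<d. (?v j)\<^sup>2)}"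
    using s xy by (simp add: scaled_ldist_eq_sqrt ldist_jl_apply)
  also have "measure (gauss_jl t d) \<dots> \<le> exp (- (real t / 2) * (s\<^sup>2 - 1 - ln (s\<^sup>2)))"
    using s by (intro jl_norm_sq_lower_tail t sum_sq_diff_pos xy) (simp_all add: power_less_one_iff)
  also have "\<dots> \<le> exp (- (real t / 2) * (s - 1)\<^sup>2)"
    using sq_sub_one_le_chernoff_rate[of s] s by (simp add: mult_left_mono)
  finally show ?thesis .
qed

lemma jl_collision_prob:
  assumes t: "0 < t" and xy: "length x = d" "length y = d" "x \<noteq> y"
  shows "measure (gauss_jl t d) {G \<in> space (gauss_jl t d). jl_apply t d G x = jl_apply t d G y} = 0"
proof -
  interpret prob_space "gauss_jl t d" using prob_space_gauss_jl[OF t] .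
  let ?v = "\<lambda>j. x ! j - y ! j"
  let ?X = "\<lambda>G. jl_coord d G ?v 0"
  have D: "distributed (gauss_jl t d) lborel ?X
             (normal_density 0 (sqrt (\<Sum>j<d. (?v j)\<^sup>2) / sqrt (real t)))"
    by (intro distributed_jl_coord t sum_sq_diff_pos xy)
  \<comment> \<open>a collision forces the first coordinate of G(x - y), a continuous random variable, to vanish\<close>
  have "?X G = 0" if "jl_apply t d G x = jl_apply t d G y" for G
  proof -
    have "jl_apply t d G x ! 0 - jl_apply t d G y ! 0 = 0" using that by simp
    then show ?thesis
      using t by (simp add: jl_apply_def jl_coord_def sum_subtractf right_diff_distrib)
  qed
  then have "{G \<in> space (gauss_jl t d). jl_apply t d G x = jl_apply t d G y}
             \<subseteq> ?X -` {0} \<inter> space (gauss_jl t d)"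
    by auto
  then have "measure (gauss_jl t d) {G \<in> space (gauss_jl t d). jl_apply t d G x = jl_apply t d G y}
             \<le> measure (gauss_jl t d) (?X -` {0} \<inter> space (gauss_jl t d))"
    by (intro finite_measure_mono) (unfold jl_coord_def, measurable)
  also have "\<dots> = 0"
    using distributed_emeasure[OF D]
    by (simp add: measure_def nn_integral_null_set finite_imp_null_set_lborel)
  finally show ?thesis using measure_nonneg antisym by blast
qed

lemma (in finite_measure) measure_Ex_le_sum:
  assumes I: "finite I" and Q: "\<And>i. i \<in> I \<Longrightarrow> {\<omega> \<in> space M. Q i \<omega>} \<in> sets M"
  shows "{\<omega> \<in> space M. \<exists>i\<in>I. Q i \<omega>} \<in> sets M"
    "measure M {\<omega> \<in> space M. \<exists>i\<in>I. Q i \<omega>} \<le> (\<Sum>i\<in>I. measure M {\<omega> \<in> space M. Q i \<omega>})"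
proof -
  have eq: "{\<omega> \<in> space M. \<exists>i\<in>I. Q i \<omega>} = (\<Union>i\<in>I. {\<omega> \<in> space M. Q i \<omega>})" by auto
  show "{\<omega> \<in> space M. \<exists>i\<in>I. Q i \<omega>} \<in> sets M"
    unfolding eq using I Q by auto
  show "measure M {\<omega> \<in> space M. \<exists>i\<in>I. Q i \<omega>} \<le> (\<Sum>i\<in>I. measure M {\<omega> \<in> space M. Q i \<omega>})"
    unfolding eq using I Q by (intro finite_measure_subadditive_finite) auto
qed

definition distinct_pairs :: "nat \<Rightarrow> (real list \<times> real list) set \<Rightarrow> bool" where
  "distinct_pairs d E \<longleftrightarrow> (\<forall>p\<in>E. length (fst p) = d \<and> length (snd p) = d \<and> fst p \<noteq> snd p)"

lemma jl_collision_event: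
  assumes t: "0 < t" and E: "finite E" "distinct_pairs d E"
  defines "U \<equiv> {G \<in> space (gauss_jl t d). \<exists>p\<in>E. jl_apply t d G (fst p) = jl_apply t d G (snd p)}"
  shows "U \<in> sets (gauss_jl t d)" "measure (gauss_jl t d) U = 0"
proof -
  interpret prob_space "gauss_jl t d" using prob_space_gauss_jl[OF t] .
  have U: "U = {G \<in> space (gauss_jl t d). \<exists>p\<in>E. ldist (jl_apply t d G (fst p)) (jl_apply t d G (snd p)) = 0}"
    unfolding U_def by (auto simp: ldist_eq_0_iff)
  have sets: "{G \<in> space (gauss_jl t d). ldist (jl_apply t d G (fst p)) (jl_apply t d G (snd p)) = 0} \<in> events" for p
    by measurable
  show "U \<in> events" unfolding U by (rule measure_Ex_le_sum(1)[OF E(1) sets])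
  have "measure (gauss_jl t d) U \<le> (\<Sum>p\<in>E. measure (gauss_jl t d)
          {G \<in> space (gauss_jl t d). ldist (jl_apply t d G (fst p)) (jl_apply t d G (snd p)) = 0})"
    unfolding U by (rule measure_Ex_le_sum(2)[OF E(1) sets])
  also have "\<dots> = 0"
    using E(2) jl_collision_prob[OF t] by (intro sum.neutral) (auto simp: distinct_pairs_def ldist_eq_0_iff)
  finally show "measure (gauss_jl t d) U = 0" using measure_nonneg[of "gauss_jl t d" U] by linarith
qed

lemma jl_stretch_event:
  assumes t: "0 < t" and E: "finite E" "distinct_pairs d E" and s: "1 < s"
  defines "U \<equiv> {G \<in> space (gauss_jl t d). \<exists>p\<in>E.
             s * ldist (fst p) (snd p) \<le> ldist (jl_apply t d G (fst p)) (jl_apply t d G (snd p))}"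
  shows "U \<in> sets (gauss_jl t d)" "measure (gauss_jl t d) U \<le> real (card E) * exp (- (real t / 2) * (s - 1)\<^sup>2)"
proof -
  interpret prob_space "gauss_jl t d" using prob_space_gauss_jl[OF t] .
  have sets: "{G \<in> space (gauss_jl t d).
      s * ldist (fst p) (snd p) \<le> ldist (jl_apply t d G (fst p)) (jl_apply t d G (snd p))} \<in> events" for p
    by measurable
  show "U \<in> events" unfolding U_def by (rule measure_Ex_le_sum(1)[OF E(1) sets])
  have "measure (gauss_jl t d) U \<le> (\<Sum>p\<in>E. measure (gauss_jl t d) {G \<in> space (gauss_jl t d).
      s * ldist (fst p) (snd p) \<le> ldist (jl_apply t d G (fst p)) (jl_apply t d G (snd p))})"
    unfolding U_def by (rule measure_Ex_le_sum(2)[OF E(1) sets])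
  also have "\<dots> \<le> (\<Sum>p\<in>E. exp (- (real t / 2) * (s - 1)\<^sup>2))"
    using E(2) by (intro sum_mono jl_stretch_prob[OF t _ _ _ s]) (auto simp: distinct_pairs_def)
  finally show "measure (gauss_jl t d) U \<le> real (card E) * exp (- (real t / 2) * (s - 1)\<^sup>2)" by simp
qed

lemma jl_shrink_event:
  assumes t: "0 < t" and E: "finite E" "distinct_pairs d E" and s: "0 < s" "s < 1"
  defines "U \<equiv> {G \<in> space (gauss_jl t d). \<exists>p\<in>E.
             ldist (jl_apply t d G (fst p)) (jl_apply t d G (snd p)) \<le> s * ldist (fst p) (snd p)}"
  shows "U \<in> sets (gauss_jl t d)" "measure (gauss_jl t d) U \<le> real (card E) * exp (- (real t / 2) * (s - 1)\<^sup>2)"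
proof -
  interpret prob_space "gauss_jl t d" using prob_space_gauss_jl[OF t] .
  have sets: "{G \<in> space (gauss_jl t d).
      ldist (jl_apply t d G (fst p)) (jl_apply t d G (snd p)) \<le> s * ldist (fst p) (snd p)} \<in> events" for p
    by measurable
  show "U \<in> events" unfolding U_def by (rule measure_Ex_le_sum(1)[OF E(1) sets])
  have "measure (gauss_jl t d) U \<le> (\<Sum>p\<in>E. measure (gauss_jl t d) {G \<in> space (gauss_jl t d).
      ldist (jl_apply t d G (fst p)) (jl_apply t d G (snd p)) \<le> s * ldist (fst p) (snd p)})"
    unfolding U_def by (rule measure_Ex_le_sum(2)[OF E(1) sets])
  also have "\<dots> \<le> (\<Sum>p\<in>E. exp (- (real t / 2) * (s - 1)\<^sup>2))"
    using E(2) by (intro sum_mono jl_shrink_prob[OF t _ _ _ s]) (auto simp: distinct_pairs_def)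
  finally show "measure (gauss_jl t d) U \<le> real (card E) * exp (- (real t / 2) * (s - 1)\<^sup>2)" by simp
qed

lemma jl_level_stretch_event:
  assumes t: "0 < t" and E: "\<And>i. i < L \<Longrightarrow> finite (E i) \<and> distinct_pairs d (E i)"
  defines "U \<equiv> {G \<in> space (gauss_jl t d). \<exists>i<L. \<exists>p\<in>E i.
      (2 + real i) * ldist (fst p) (snd p) \<le> ldist (jl_apply t d G (fst p)) (jl_apply t d G (snd p))}"
  shows "U \<in> sets (gauss_jl t d)"
    "measure (gauss_jl t d) U \<le> (\<Sum>i<L. real (card (E i)) * exp (- (real t / 2) * (1 + real i)\<^sup>2))"
proof -
  interpret prob_space "gauss_jl t d" using prob_space_gauss_jl[OF t] .
  define V where "V i = {G \<in> space (gauss_jl t d). \<exists>p\<in>E i.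
      (2 + real i) * ldist (fst p) (snd p) \<le> ldist (jl_apply t d G (fst p)) (jl_apply t d G (snd p))}" for i
  have V: "V i \<in> events" "measure (gauss_jl t d) (V i) \<le> real (card (E i)) * exp (- (real t / 2) * (1 + real i)\<^sup>2)"
    if "i \<in> {..<L}" for i
    using jl_stretch_event[OF t, of "E i" d "2 + real i"] E that unfolding V_def by (auto simp: add.commute)
  have U: "U = {G \<in> space (gauss_jl t d). \<exists>i\<in>{..<L}. G \<in> V i}"
    unfolding U_def V_def by auto
  have sets: "{G \<in> space (gauss_jl t d). G \<in> V i} \<in> events" if "i \<in> {..<L}" for i
    using V(1)[OF that] sets.sets_into_space[OF V(1)[OF that]] by (simp add: Int_absorb1 Collect_conj_eq)
  show "U \<in> events" unfolding U by (rule measure_Ex_le_sum(1)[OF _ sets]) auto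
  have "measure (gauss_jl t d) U \<le> (\<Sum>i<L. measure (gauss_jl t d) {G \<in> space (gauss_jl t d). G \<in> V i})"
    unfolding U by (rule measure_Ex_le_sum(2)[OF _ sets]) auto
  also have "\<dots> \<le> (\<Sum>i<L. real (card (E i)) * exp (- (real t / 2) * (1 + real i)\<^sup>2))"
    using V sets.sets_into_space by (intro sum_mono) (simp add: Collect_conj_eq Int_absorb1)
  finally show "measure (gauss_jl t d) U \<le> (\<Sum>i<L. real (card (E i)) * exp (- (real t / 2) * (1 + real i)\<^sup>2))" .
qed

definition off_diagonal :: "'a set \<Rightarrow> ('a \<times> 'a) set" where
  "off_diagonal S = {p \<in> S \<times> S. fst p \<noteq> snd p}"

lemma off_diagonal_finite_card:
  "finite S \<Longrightarrow> finite (off_diagonal S) \<and> card (off_diagonal S) \<le> card S ^ 2"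
  using card_mono[of "S \<times> S" "off_diagonal S"]
  by (auto simp: off_diagonal_def card_cartesian_product power2_eq_square intro: finite_subset)

lemma distinct_pairs_subset_off_diagonal:
  "P \<subseteq> {x. length x = d} \<Longrightarrow> E \<subseteq> off_diagonal P \<Longrightarrow> distinct_pairs d E"
  by (auto simp: distinct_pairs_def off_diagonal_def)

lemma jl_good_event:
  assumes t: "0 < t" and P: "finite P" "P \<subseteq> {x. length x = d}" and N: "N \<subseteq> P"
    and \<delta>: "0 < \<delta>" "\<delta> < 1" and E: "\<And>i. i < L \<Longrightarrow> E i \<subseteq> off_diagonal P"
  obtains A where "A \<in> sets (gauss_jl t d)"
    "1 - (2 * real (card N) ^ 2 * exp (- (real t / 2) * \<delta>\<^sup>2)
          + (\<Sum>i<L. real (card (E i)) * exp (- (real t / 2) * (1 + real i)\<^sup>2))) \<le> measure (gauss_jl t d) A"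
    "\<And>G. G \<in> A \<Longrightarrow> inj_on (jl_apply t d G) P"
    "\<And>G x y. G \<in> A \<Longrightarrow> x \<in> N \<Longrightarrow> y \<in> N \<Longrightarrow> x \<noteq> y \<Longrightarrow>
       (1 - \<delta>) * ldist x y \<le> ldist (jl_apply t d G x) (jl_apply t d G y) \<and>
       ldist (jl_apply t d G x) (jl_apply t d G y) \<le> (1 + \<delta>) * ldist x y"
    "\<And>G i p. G \<in> A \<Longrightarrow> i < L \<Longrightarrow> p \<in> E i \<Longrightarrow>
       ldist (jl_apply t d G (fst p)) (jl_apply t d G (snd p)) \<le> (2 + real i) * ldist (fst p) (snd p)"
proof -
  interpret prob_space "gauss_jl t d" using prob_space_gauss_jl[OF t] .
  let ?M = "gauss_jl t d" and ?g = "\<lambda>G. jl_apply t d G"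
  have offP: "finite (off_diagonal P)" "distinct_pairs d (off_diagonal P)"
    using off_diagonal_finite_card[OF P(1)] distinct_pairs_subset_off_diagonal[OF P(2)] by auto
  have N': "finite N" "N \<subseteq> {x. length x = d}" using N P finite_subset by auto
  have offN: "finite (off_diagonal N)" "distinct_pairs d (off_diagonal N)"
    "real (card (off_diagonal N)) \<le> real (card N) ^ 2"
    using off_diagonal_finite_card[OF N'(1)] distinct_pairs_subset_off_diagonal[OF N'(2)]
    by (auto simp flip: of_nat_power)
  have offE: "finite (E i) \<and> distinct_pairs d (E i)" if "i < L" for i
  proof -
    have sub: "E i \<subseteq> off_diagonal P" using E that by blast
    show ?thesis using finite_subset[OF sub offP(1)] distinct_pairs_subset_off_diagonal[OF P(2) sub] by simp
  qed
  define U1 where "U1 = {G \<in> space ?M. \<exists>p\<in>off_diagonal P. ?g G (fst p) = ?g G (snd p)}"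
  define U2 where "U2 = {G \<in> space ?M. \<exists>p\<in>off_diagonal N.
                          (1 + \<delta>) * ldist (fst p) (snd p) \<le> ldist (?g G (fst p)) (?g G (snd p))}"
  define U3 where "U3 = {G \<in> space ?M. \<exists>p\<in>off_diagonal N.
                          ldist (?g G (fst p)) (?g G (snd p)) \<le> (1 - \<delta>) * ldist (fst p) (snd p)}"
  define U4 where "U4 = {G \<in> space ?M. \<exists>i<L. \<exists>p\<in>E i.
                          (2 + real i) * ldist (fst p) (snd p) \<le> ldist (?g G (fst p)) (?g G (snd p))}"
  note U1 = jl_collision_event[OF t offP, folded U1_def]
  have s: "1 < 1 + \<delta>" "0 < 1 - \<delta>" "1 - \<delta> < 1" using \<delta> by auto
  note U2 = jl_stretch_event[OF t offN(1,2) s(1), folded U2_def]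
  note U3 = jl_shrink_event[OF t offN(1,2) s(2,3), folded U3_def]
  note U4 = jl_level_stretch_event[OF t, of L E d, OF offE, folded U4_def]
  define A where "A = space ?M - (U1 \<union> U2 \<union> U3 \<union> U4)"
  have "U1 \<union> U2 \<in> events" using U1(1) U2(1) by (rule sets.Un)
  moreover from this have "U1 \<union> U2 \<union> U3 \<in> events" using U3(1) by (rule sets.Un)
  moreover from this have "U1 \<union> U2 \<union> U3 \<union> U4 \<in> events" using U4(1) by (rule sets.Un)
  ultimately have sets: "U1 \<union> U2 \<in> events" "U1 \<union> U2 \<union> U3 \<in> events" "U1 \<union> U2 \<union> U3 \<union> U4 \<in> events"
    by blast+
  have "measure ?M (U1 \<union> U2 \<union> U3 \<union> U4) \<le> measure ?M U1 + measure ?M U2 + measure ?M U3 + measure ?M U4"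
    using measure_Un_le[OF sets(2) U4(1)] measure_Un_le[OF sets(1) U3(1)] measure_Un_le[OF U1(1) U2(1)]
    by linarith
  also have "\<dots> \<le> 2 * real (card N) ^ 2 * exp (- (real t / 2) * \<delta>\<^sup>2)
          + (\<Sum>i<L. real (card (E i)) * exp (- (real t / 2) * (1 + real i)\<^sup>2))"
  proof -
    have "real (card (off_diagonal N)) * exp (- (real t / 2) * \<delta>\<^sup>2)
          \<le> real (card N) ^ 2 * exp (- (real t / 2) * \<delta>\<^sup>2)"
      by (rule mult_right_mono[OF offN(3)]) simp
    moreover have "measure ?M U2 \<le> real (card (off_diagonal N)) * exp (- (real t / 2) * \<delta>\<^sup>2)"
      "measure ?M U3 \<le> real (card (off_diagonal N)) * exp (- (real t / 2) * \<delta>\<^sup>2)"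
      "measure ?M U4 \<le> (\<Sum>i<L. real (card (E i)) * exp (- (real t / 2) * (1 + real i)\<^sup>2))"
      using U2(2) U3(2) U4(2) by simp_all
    ultimately show ?thesis using U1(2) by linarith
  qed
  finally have bound: "1 - (2 * real (card N) ^ 2 * exp (- (real t / 2) * \<delta>\<^sup>2)
          + (\<Sum>i<L. real (card (E i)) * exp (- (real t / 2) * (1 + real i)\<^sup>2))) \<le> measure ?M A"
    using prob_compl[OF sets(3)] unfolding A_def by linarith
  have A: "A \<in> events" unfolding A_def using sets(3) by auto
  have inj: "inj_on (?g G) P" if "G \<in> A" for G
  proof (rule inj_onI, rule ccontr)
    fix x y assume "x \<in> P" "y \<in> P" "?g G x = ?g G y" "x \<noteq> y"
    then have "(x, y) \<in> off_diagonal P" "?g G (fst (x, y)) = ?g G (snd (x, y))"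
      by (simp_all add: off_diagonal_def)
    then have "G \<in> U1" using that unfolding A_def U1_def by blast
    then show False using that unfolding A_def by blast
  qed
  have net: "(1 - \<delta>) * ldist x y \<le> ldist (?g G x) (?g G y) \<and> ldist (?g G x) (?g G y) \<le> (1 + \<delta>) * ldist x y"
    if "G \<in> A" "x \<in> N" "y \<in> N" "x \<noteq> y" for G x y
  proof -
    have p: "(x, y) \<in> off_diagonal N" using that by (simp add: off_diagonal_def)
    have "G \<in> space ?M" "G \<notin> U2" "G \<notin> U3" using that(1) unfolding A_def by blast+
    then show ?thesis using p unfolding U2_def U3_def by fastforce
  qed
  have links: "ldist (?g G (fst p)) (?g G (snd p)) \<le> (2 + real i) * ldist (fst p) (snd p)"
    if "G \<in> A" "i < L" "p \<in> E i" for G i p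
  proof -
    have "G \<in> space ?M" "G \<notin> U4" using that(1) unfolding A_def by blast+
    then have "\<not> (2 + real i) * ldist (fst p) (snd p) \<le> ldist (?g G (fst p)) (?g G (snd p))"
      using that(2,3) unfolding U4_def by blast
    then show ?thesis by linarith
  qed
  show ?thesis by (rule that[OF A bound inj net links])
qed


section \<open>Doubling dimension, nets and packings\<close>

definition doubling_cover :: "nat \<Rightarrow> nat \<Rightarrow> real list set \<Rightarrow> bool" where
  "doubling_cover d lam P \<longleftrightarrow> (\<forall>c r. length c = d \<and> 0 < r \<longrightarrow>
      (\<exists>Cs. finite Cs \<and> card Cs \<le> 2 ^ lam \<and> Cs \<subseteq> {x. length x = d} \<and>
             P \<inter> lcball c r \<subseteq> (\<Union>c'\<in>Cs. lcball c' (r / 2))))"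

lemma ddim_eq_Least_doubling_cover: "ddim d P = (LEAST lam. doubling_cover d lam P)"
  unfolding ddim_def doubling_cover_def ..

lemma doubling_cover_ddim:
  assumes fin: "finite P" and P: "P \<subseteq> {x. length x = d}"
  shows "doubling_cover d (ddim d P) P"
  unfolding ddim_eq_Least_doubling_cover
proof (rule LeastI)
  show "doubling_cover d (card P) P"
    unfolding doubling_cover_def
  proof (intro allI impI)
    fix c :: "real list" and r :: real
    assume "length c = d \<and> 0 < r"
    then have "P \<inter> lcball c r \<subseteq> (\<Union>c'\<in>P \<inter> lcball c r. lcball c' (r / 2))"
      by (auto simp: lcball_def)
    moreover have "card (P \<inter> lcball c r) \<le> card P" by (rule card_mono[OF fin]) auto
    then have "card (P \<inter> lcball c r) \<le> 2 ^ card P" using less_exp[of "card P"] by linarith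
    ultimately show "\<exists>Cs. finite Cs \<and> card Cs \<le> 2 ^ card P \<and> Cs \<subseteq> {x. length x = d} \<and>
                       P \<inter> lcball c r \<subseteq> (\<Union>c'\<in>Cs. lcball c' (r / 2))"
      using fin P by (intro exI[of _ "P \<inter> lcball c r"]) auto
  qed
qed

lemma doubling_cover_iterate:
  assumes dc: "doubling_cover d lam P" and r: "0 < r"
    and Z: "finite Z" "Z \<subseteq> {x. length x = d}" "P \<subseteq> (\<Union>z\<in>Z. lcball z r)"
  shows "\<exists>Cs. finite Cs \<and> card Cs \<le> card Z * 2 ^ (lam * m) \<and> Cs \<subseteq> {x. length x = d} \<and>
             P \<subseteq> (\<Union>c\<in>Cs. lcball c (r / 2 ^ m))"
proof (induction m)
  case 0
  then show ?case using Z by (intro exI[of _ Z]) auto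
next
  case (Suc m)
  then obtain Cs where Cs: "finite Cs" "card Cs \<le> card Z * 2 ^ (lam * m)" "Cs \<subseteq> {x. length x = d}"
    "P \<subseteq> (\<Union>c\<in>Cs. lcball c (r / 2 ^ m))" by blast
  have "\<forall>c\<in>Cs. \<exists>X. finite X \<and> card X \<le> 2 ^ lam \<and> X \<subseteq> {x. length x = d} \<and>
          P \<inter> lcball c (r / 2 ^ m) \<subseteq> (\<Union>c'\<in>X. lcball c' (r / 2 ^ m / 2))"
  proof
    fix c assume "c \<in> Cs"
    then have "length c = d \<and> 0 < r / 2 ^ m" using Cs(3) r by auto
    from dc[unfolded doubling_cover_def, rule_format, OF this]
    show "\<exists>X. finite X \<and> card X \<le> 2 ^ lam \<and> X \<subseteq> {x. length x = d} \<and>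
          P \<inter> lcball c (r / 2 ^ m) \<subseteq> (\<Union>c'\<in>X. lcball c' (r / 2 ^ m / 2))" .
  qed
  then obtain f where f: "\<And>c. c \<in> Cs \<Longrightarrow> finite (f c) \<and> card (f c) \<le> 2 ^ lam \<and>
      f c \<subseteq> {x. length x = d} \<and> P \<inter> lcball c (r / 2 ^ m) \<subseteq> (\<Union>c'\<in>f c. lcball c' (r / 2 ^ m / 2))"
    by metis
  define Cs' where "Cs' = (\<Union>c\<in>Cs. f c)"
  have "card Cs' \<le> (\<Sum>c\<in>Cs. card (f c))"
    unfolding Cs'_def by (rule card_UN_le[OF Cs(1)])
  also have "\<dots> \<le> card Cs * 2 ^ lam"
    using sum_mono[of Cs "\<lambda>c. card (f c)" "\<lambda>_. 2 ^ lam"] f by simp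
  also have "\<dots> \<le> card Z * 2 ^ (lam * Suc m)"
    using Cs(2) by (simp add: power_add algebra_simps)
  finally have "card Cs' \<le> card Z * 2 ^ (lam * Suc m)" .
  moreover have "P \<subseteq> (\<Union>c\<in>Cs'. lcball c (r / 2 ^ Suc m))"
  proof
    fix x assume x: "x \<in> P"
    then obtain c where c: "c \<in> Cs" "x \<in> lcball c (r / 2 ^ m)" using Cs(4) by blast
    then obtain c' where "c' \<in> f c" "x \<in> lcball c' (r / 2 ^ m / 2)" using f[OF c(1)] x by blast
    then show "x \<in> (\<Union>c\<in>Cs'. lcball c (r / 2 ^ Suc m))"
      using c unfolding Cs'_def by (auto simp: mult.commute)
  qed
  moreover have "finite Cs'" "Cs' \<subseteq> {x. length x = d}"
    unfolding Cs'_def using Cs(1) f by auto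
  ultimately show ?case by blast
qed

lemma doubling_net:
  assumes dc: "doubling_cover d lam P" and P: "P \<subseteq> {x. length x = d}" and r: "0 < r"
    and Z: "finite Z" "Z \<subseteq> P" "\<forall>x\<in>P. \<exists>z\<in>Z. ldist z x \<le> r"
  shows "\<exists>N\<subseteq>P. card N \<le> card Z * 2 ^ (lam * m) \<and> (\<forall>x\<in>P. \<exists>y\<in>N. ldist y x \<le> 2 * r / 2 ^ m)"
proof -
  have cover: "P \<subseteq> (\<Union>z\<in>Z. lcball z r)"
  proof
    fix x assume x: "x \<in> P"
    then obtain z where "z \<in> Z" "ldist z x \<le> r" using Z(3) by blast
    moreover have "length z = d" "length x = d" using x \<open>z \<in> Z\<close> Z(2) P by auto
    ultimately show "x \<in> (\<Union>z\<in>Z. lcball z r)" by (auto simp: lcball_def)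
  qed
  have "Z \<subseteq> {x. length x = d}" using Z(2) P by blast
  from doubling_cover_iterate[OF dc r Z(1) this cover, of m]
  obtain Cs where Cs: "finite Cs" "card Cs \<le> card Z * 2 ^ (lam * m)" "Cs \<subseteq> {x. length x = d}"
    "P \<subseteq> (\<Union>c\<in>Cs. lcball c (r / 2 ^ m))"
    by blast
  define \<rho> where "\<rho> = r / 2 ^ m"
  define B where "B = {c \<in> Cs. P \<inter> lcball c \<rho> \<noteq> {}}"
  define pick where "pick c = (SOME p. p \<in> P \<inter> lcball c \<rho>)" for c
  have pick: "pick c \<in> P \<inter> lcball c \<rho>" if "c \<in> B" for c
  proof -
    have "\<exists>p. p \<in> P \<inter> lcball c \<rho>" using that unfolding B_def by blast
    then show ?thesis unfolding pick_def by (rule someI_ex)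
  qed
  have "card (pick ` B) \<le> card B" by (rule card_image_le) (use Cs(1) in \<open>simp add: B_def\<close>)
  also have "card B \<le> card Cs" unfolding B_def by (rule card_mono[OF Cs(1)]) auto
  finally have "card (pick ` B) \<le> card Z * 2 ^ (lam * m)" using Cs(2) by linarith
  moreover have "pick ` B \<subseteq> P" using pick by auto
  moreover have "\<exists>y\<in>pick ` B. ldist y x \<le> 2 * r / 2 ^ m" if x: "x \<in> P" for x
  proof -
    obtain c where c: "c \<in> Cs" "x \<in> lcball c \<rho>" using Cs(4) x unfolding \<rho>_def by blast
    then have cB: "c \<in> B" using x unfolding B_def by auto
    have lengths: "length c = d" "length (pick c) = d" "length x = d"
      using c(1) Cs(3) pick[OF cB] x P by auto
    have "ldist (pick c) x \<le> ldist (pick c) c + ldist c x"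
      using lengths by (intro ldist_triangle) auto
    also have "\<dots> \<le> \<rho> + \<rho>"
      using pick[OF cB] c(2) lengths ldist_commute[of c "pick c"] by (auto simp: lcball_def)
    finally show ?thesis using cB unfolding \<rho>_def by auto
  qed
  ultimately show ?thesis by blast
qed

lemma doubling_net_hierarchy:
  assumes "doubling_cover d lam P" "P \<subseteq> {x. length x = d}" "0 < r"
    "finite Z" "Z \<subseteq> P" "\<forall>x\<in>P. \<exists>z\<in>Z. ldist z x \<le> r"
  obtains Nf :: "nat \<Rightarrow> real list set" and par :: "nat \<Rightarrow> real list \<Rightarrow> real list"
  where "\<And>m. Nf m \<subseteq> P" "\<And>m. card (Nf m) \<le> card Z * 2 ^ (lam * m)"
    "\<And>m y. y \<in> P \<Longrightarrow> par m y \<in> Nf m \<and> ldist (par m y) y \<le> 2 * r / 2 ^ m"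
proof -
  have "\<forall>m. \<exists>N. N \<subseteq> P \<and> card N \<le> card Z * 2 ^ (lam * m) \<and> (\<forall>x\<in>P. \<exists>y\<in>N. ldist y x \<le> 2 * r / 2 ^ m)"
    using doubling_net[OF assms] by blast
  from choice[OF this] obtain Nf where Nf: "\<forall>m. Nf m \<subseteq> P \<and> card (Nf m) \<le> card Z * 2 ^ (lam * m) \<and>
      (\<forall>x\<in>P. \<exists>y\<in>Nf m. ldist y x \<le> 2 * r / 2 ^ m)"
    by blast
  define par where "par m y = (SOME p. p \<in> Nf m \<and> ldist p y \<le> 2 * r / 2 ^ m)" for m y
  have "par m y \<in> Nf m \<and> ldist (par m y) y \<le> 2 * r / 2 ^ m" if "y \<in> P" for m y
  proof -
    have "\<exists>p. p \<in> Nf m \<and> ldist p y \<le> 2 * r / 2 ^ m" using Nf that by blast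
    then show ?thesis unfolding par_def by (rule someI_ex)
  qed
  with Nf show ?thesis by (intro that[of Nf par]) auto
qed

definition separation :: "real list set \<Rightarrow> real" where
  "separation S = Min {ldist x y | x y. x \<in> S \<and> y \<in> S \<and> x \<noteq> y}"

lemma finite_pair_distances: "finite S \<Longrightarrow> finite {ldist x y | x y. x \<in> S \<and> y \<in> S \<and> x \<noteq> y}"
  by (rule finite_subset[of _ "(\<lambda>(x, y). ldist x y) ` (S \<times> S)"]) auto

lemma separation_le: "finite S \<Longrightarrow> x \<in> S \<Longrightarrow> y \<in> S \<Longrightarrow> x \<noteq> y \<Longrightarrow> separation S \<le> ldist x y"
  unfolding separation_def by (rule Min_le) (auto intro: finite_pair_distances)

lemma separation_attained:
  assumes "finite S" "2 \<le> card S"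
  obtains x y where "x \<in> S" "y \<in> S" "x \<noteq> y" "separation S = ldist x y"
proof -
  obtain T where "T \<subseteq> S" "card T = 2" using obtain_subset_with_card_n[OF assms(2)] .
  then obtain x y where "x \<in> S" "y \<in> S" "x \<noteq> y" by (auto simp: card_2_iff)
  then have "separation S \<in> {ldist x y | x y. x \<in> S \<and> y \<in> S \<and> x \<noteq> y}"
    unfolding separation_def using assms(1) by (intro Min_in finite_pair_distances) auto
  then show ?thesis using that by blast
qed

lemma separation_pos:
  assumes "finite S" "2 \<le> card S" "S \<subseteq> {x. length x = d}"
  shows "0 < separation S"
proof -
  obtain x y where "x \<in> S" "y \<in> S" "x \<noteq> y" "separation S = ldist x y"
    using separation_attained[OF assms(1,2)] .
  then show ?thesis using ldist_pos[of x y] assms(3) by auto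
qed

lemma maximal_separated_subset:
  assumes fin: "finite P" and P: "P \<subseteq> {x. length x = d}" and r: "0 \<le> r"
  obtains Z where "Z \<subseteq> P" "\<forall>x\<in>Z. \<forall>y\<in>Z. x \<noteq> y \<longrightarrow> r < ldist x y" "\<forall>x\<in>P. \<exists>z\<in>Z. ldist z x \<le> r"
proof -
  define Zs where "Zs = {Z. Z \<subseteq> P \<and> (\<forall>x\<in>Z. \<forall>y\<in>Z. x \<noteq> y \<longrightarrow> r < ldist x y)}"
  have bound: "card Z < Suc (card P)" if "Z \<in> Zs" for Z
    using card_mono[OF fin, of Z] that by (simp add: Zs_def)
  have "{} \<in> Zs" by (simp add: Zs_def)
  then obtain Z where Z: "Z \<in> Zs" and max: "\<And>Z'. Z' \<in> Zs \<Longrightarrow> card Z' \<le> card Z"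
    using ex_has_greatest_nat[of "\<lambda>Z. Z \<in> Zs" "{}" card "Suc (card P)"] bound by blast
  have finZ: "finite Z" using Z fin by (auto simp: Zs_def intro: finite_subset)
  \<comment> \<open>a point of P far from Z could be added to Z, contradicting maximality\<close>
  have "\<exists>z\<in>Z. ldist z x \<le> r" if x: "x \<in> P" for x
  proof (rule ccontr)
    assume far: "\<not> (\<exists>z\<in>Z. ldist z x \<le> r)"
    then have xZ: "x \<notin> Z" using r by force
    have "insert x Z \<in> Zs"
      using Z x far P unfolding Zs_def by (auto simp: not_le ldist_commute subset_iff)
    then show False using max[of "insert x Z"] xZ finZ by simp
  qed
  with Z show ?thesis by (intro that[of Z]) (auto simp: Zs_def)
qed

lemma packing_radius:
  assumes fin: "finite P" and P: "P \<subseteq> {x. length x = d}" and k: "2 \<le> k" "k \<le> card P"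
  obtains r Ss Z where "0 < r" "Ss \<subseteq> P" "card Ss = k" "\<forall>x\<in>Ss. \<forall>y\<in>Ss. x \<noteq> y \<longrightarrow> r \<le> ldist x y"
    "Z \<subseteq> P" "card Z < k" "\<forall>x\<in>P. \<exists>z\<in>Z. ldist z x \<le> r"
proof -
  define Ks where "Ks = {S. S \<subseteq> P \<and> card S = k}"
  have finKs: "finite Ks" unfolding Ks_def by (rule finite_subset[of _ "Pow P"]) (use fin in auto)
  obtain S0 where "S0 \<subseteq> P" "card S0 = k" "finite S0" by (rule obtain_subset_with_card_n[OF k(2)])
  then have "Ks \<noteq> {}" by (auto simp: Ks_def)
  have K: "finite S" "2 \<le> card S" "S \<subseteq> {x. length x = d}" if "S \<in> Ks" for S
    using that fin k P finite_subset[of S P] by (auto simp: Ks_def)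
  define r where "r = Max (separation ` Ks)"
  have "r \<in> separation ` Ks" unfolding r_def using finKs \<open>Ks \<noteq> {}\<close> by (intro Max_in) auto
  then obtain Ss where Ss: "Ss \<in> Ks" "separation Ss = r" by auto
  have r: "0 < r" using separation_pos[OF K[OF Ss(1)]] Ss(2) by simp
  obtain Z where Z: "Z \<subseteq> P" "\<forall>x\<in>Z. \<forall>y\<in>Z. x \<noteq> y \<longrightarrow> r < ldist x y" "\<forall>x\<in>P. \<exists>z\<in>Z. ldist z x \<le> r"
    using maximal_separated_subset[OF fin P less_imp_le[OF r]] by blast
  have "card Z < k"
  proof (rule ccontr)
    assume "\<not> card Z < k"
    then have "k \<le> card Z" by simp
    then obtain S where S: "S \<subseteq> Z" "card S = k" "finite S" by (rule obtain_subset_with_card_n)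
    then have SK: "S \<in> Ks" using Z(1) by (auto simp: Ks_def)
    obtain x y where "x \<in> S" "y \<in> S" "x \<noteq> y" "separation S = ldist x y"
      by (rule separation_attained[OF K(1,2)[OF SK]])
    then have "r < separation S" using Z(2) S(1) by auto
    moreover have "separation S \<le> r" unfolding r_def using finKs SK by auto
    ultimately show False by simp
  qed
  moreover have "r \<le> ldist x y" if "x \<in> Ss" "y \<in> Ss" "x \<noteq> y" for x y
    using separation_le[OF K(1)[OF Ss(1)] that] Ss(2) by simp
  ultimately show ?thesis using Ss(1) r Z(1,3) by (intro that[of r Ss Z]) (auto simp: Ks_def)
qed

lemma fine_net_eq:
  assumes fin: "finite P" and P: "P \<subseteq> {x. length x = d}" "2 \<le> card P" and N: "N \<subseteq> P"
    and fine: "\<forall>x\<in>P. \<exists>y\<in>N. ldist y x < separation P"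
  shows "N = P"
proof -
  have "x \<in> N" if x: "x \<in> P" for x
  proof -
    obtain y where "y \<in> N" "ldist y x < separation P" using fine x by blast
    then show ?thesis using separation_le[OF fin, of y x] N x by (cases "y = x") auto
  qed
  with N show ?thesis by blast
qed

section \<open>Chaining\<close>

lemma chaining:
  fixes Nf :: "nat \<Rightarrow> real list set" and par :: "nat \<Rightarrow> real list \<Rightarrow> real list"
    and g :: "real list \<Rightarrow> real list"
  assumes P: "P \<subseteq> {x. length x = d}" and g: "\<And>x. length (g x) = t"
    and Nf: "\<And>m. Nf m \<subseteq> P"
    and par: "\<And>m y. y \<in> P \<Longrightarrow> par m y \<in> Nf m \<and> ldist (par m y) y \<le> 2 * r / 2 ^ m"
    and top: "Nf (j0 + L) = P"
    and links: "\<And>i y. i < L \<Longrightarrow> y \<in> Nf (j0 + i + 1) \<Longrightarrow>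
               ldist (g y) (g (par (j0 + i) y)) \<le> (2 + real i) * ldist y (par (j0 + i) y)"
    and r: "0 \<le> r"
  shows "\<forall>x\<in>P. \<exists>c\<in>Nf j0. ldist c x \<le> 12 * r / 2 ^ j0 \<and> ldist (g c) (g x) \<le> 12 * r / 2 ^ j0"
proof -
  \<comment> \<open>following parents from level j0 + L down to level j0 + i costs at most \<beta> i, before and after g\<close>
  define \<beta> where "\<beta> i = r * (4 * real i + 12) / 2 ^ (j0 + i)" for i
  have len: "length x = d" if "x \<in> Nf m" for x m using that Nf P by blast
  have "\<forall>x\<in>P. \<exists>c\<in>Nf (j0 + (L - n)). ldist c x \<le> \<beta> (L - n) \<and> ldist (g c) (g x) \<le> \<beta> (L - n)"
    if "n \<le> L" for n
    using that
  proof (induction n)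
    case 0
    have "0 \<le> \<beta> L" using r by (simp add: \<beta>_def)
    then show ?case using top by (metis diff_zero ldist_self order_refl)
  next
    case (Suc n)
    define i where "i = L - Suc n"
    have i: "L - n = Suc i" "i < L" using Suc.prems by (auto simp: i_def)
    show ?case
    proof
      fix x assume x: "x \<in> P"
      from Suc.IH Suc.prems x i obtain c' where
        c': "c' \<in> Nf (j0 + Suc i)" "ldist c' x \<le> \<beta> (Suc i)" "ldist (g c') (g x) \<le> \<beta> (Suc i)"
        by auto
      define c where "c = par (j0 + i) c'"
      have c: "c \<in> Nf (j0 + i)" "ldist c c' \<le> 2 * r / 2 ^ (j0 + i)"
        using par[of c' "j0 + i"] c'(1) Nf unfolding c_def by auto
      have lengths: "length x = d" "length c = d" "length c' = d"
        using x P len[OF c(1)] len[OF c'(1)] by auto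
      have step: "\<beta> (Suc i) + 2 * r / 2 ^ (j0 + i) \<le> \<beta> i"
        "\<beta> (Suc i) + (2 + real i) * (2 * r / 2 ^ (j0 + i)) = \<beta> i"
        using r by (auto simp: \<beta>_def field_simps)
      have "ldist c x \<le> ldist c c' + ldist c' x" using lengths by (intro ldist_triangle) auto
      then have dist: "ldist c x \<le> \<beta> i" using c(2) c'(2) step(1) by linarith
      have "ldist (g c') (g c) \<le> (2 + real i) * ldist c' c"
        using links[OF i(2), of c'] c'(1) unfolding c_def by simp
      also have "\<dots> \<le> (2 + real i) * (2 * r / 2 ^ (j0 + i))"
        using c(2) lengths ldist_commute[of c c'] by (intro mult_left_mono) auto
      finally have "ldist (g c') (g c) \<le> (2 + real i) * (2 * r / 2 ^ (j0 + i))" .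
      then have "ldist (g c) (g x) \<le> \<beta> i"
        using ldist_triangle[of "g c" "g c'" "g x"] ldist_commute[of "g c" "g c'"] c'(3) step(2) g
        by simp
      with dist show "\<exists>c\<in>Nf (j0 + (L - Suc n)). ldist c x \<le> \<beta> (L - Suc n) \<and> ldist (g c) (g x) \<le> \<beta> (L - Suc n)"
        using c(1) unfolding i_def by blast
    qed
  qed
  from this[of L] show ?thesis by (simp add: \<beta>_def mult.commute)
qed

lemma near_isometry_from_net:
  fixes g :: "real list \<Rightarrow> real list"
  assumes N: "N \<subseteq> P" and P: "P \<subseteq> {x. length x = d}" and g: "\<And>x. length (g x) = t"
    and B: "0 \<le> B" and \<delta>: "0 \<le> \<delta>" "\<delta> \<le> 1"
    and near: "\<forall>x\<in>P. \<exists>c\<in>N. ldist c x \<le> B \<and> ldist (g c) (g x) \<le> B"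
    and net: "\<And>c c'. c \<in> N \<Longrightarrow> c' \<in> N \<Longrightarrow> c \<noteq> c' \<Longrightarrow>
                (1 - \<delta>) * ldist c c' \<le> ldist (g c) (g c') \<and> ldist (g c) (g c') \<le> (1 + \<delta>) * ldist c c'"
    and x: "x \<in> P" and y: "y \<in> P"
  shows "ldist (g x) (g y) \<le> (1 + \<delta>) * ldist x y + 6 * B"
        "(1 - \<delta>) * ldist x y - 6 * B \<le> ldist (g x) (g y)"
proof -
  obtain c where c: "c \<in> N" "ldist c x \<le> B" "ldist (g c) (g x) \<le> B" using near x by blast
  obtain c' where c': "c' \<in> N" "ldist c' y \<le> B" "ldist (g c') (g y) \<le> B" using near y by blast
  have cc': "(1 - \<delta>) * ldist c c' \<le> ldist (g c) (g c')" "ldist (g c) (g c') \<le> (1 + \<delta>) * ldist c c'"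
    using net[OF c(1) c'(1)] \<delta> by (cases "c = c'"; simp)+
  have lengths: "length x = d" "length y = d" "length c = d" "length c' = d"
    using x y c(1) c'(1) N P by auto
  have sym: "ldist c x = ldist x c" "ldist c' y = ldist y c'"
    "ldist (g c) (g x) = ldist (g x) (g c)" "ldist (g c') (g y) = ldist (g y) (g c')"
    using lengths g by (auto intro: ldist_commute)
  have "ldist c c' \<le> ldist c x + ldist x y + ldist y c'"
    using ldist_triangle[of c x c'] ldist_triangle[of x y c'] lengths by auto
  then have "(1 + \<delta>) * ldist c c' \<le> (1 + \<delta>) * (ldist x y + 2 * B)"
    using sym c c' \<delta> by (intro mult_left_mono) auto
  moreover have "ldist (g x) (g y) \<le> ldist (g x) (g c) + ldist (g c) (g c') + ldist (g c') (g y)"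
    using ldist_triangle[of "g x" "g c" "g y"] ldist_triangle[of "g c" "g c'" "g y"] g by auto
  moreover have "2 * B * \<delta> \<le> 2 * B" using \<delta> B by (simp add: mult_left_le)
  ultimately show "ldist (g x) (g y) \<le> (1 + \<delta>) * ldist x y + 6 * B"
    using cc' sym c c' by (simp add: algebra_simps)
  have "ldist x y \<le> ldist x c + ldist c c' + ldist c' y"
    using ldist_triangle[of x c y] ldist_triangle[of c c' y] lengths by auto
  then have "(1 - \<delta>) * (ldist x y - 2 * B) \<le> (1 - \<delta>) * ldist c c'"
    using sym c c' \<delta> by (intro mult_left_mono) auto
  moreover have "ldist (g c) (g c') \<le> ldist (g c) (g x) + ldist (g x) (g y) + ldist (g y) (g c')"
    using ldist_triangle[of "g c" "g x" "g c'"] ldist_triangle[of "g x" "g y" "g c'"] g by auto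
  moreover have "(1 - \<delta>) * (ldist x y - 2 * B) = (1 - \<delta>) * ldist x y - 2 * B + 2 * B * \<delta>"
    by (simp add: algebra_simps)
  moreover have "0 \<le> 2 * B * \<delta>" using \<delta> B by simp
  ultimately show "(1 - \<delta>) * ldist x y - 6 * B \<le> ldist (g x) (g y)"
    using cc' sym c c' B by linarith
qed

lemma near_isometry_from_hierarchy:
  fixes Nf :: "nat \<Rightarrow> real list set" and par :: "nat \<Rightarrow> real list \<Rightarrow> real list"
    and g :: "real list \<Rightarrow> real list"
  assumes P: "P \<subseteq> {x. length x = d}" and g: "\<And>x. length (g x) = t"
    and Nf: "\<And>m. Nf m \<subseteq> P"
    and par: "\<And>m y. y \<in> P \<Longrightarrow> par m y \<in> Nf m \<and> ldist (par m y) y \<le> 2 * r / 2 ^ m"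
    and top: "Nf (j0 + L) = P"
    and links: "\<And>i y. i < L \<Longrightarrow> y \<in> Nf (j0 + i + 1) \<Longrightarrow>
               ldist (g y) (g (par (j0 + i) y)) \<le> (2 + real i) * ldist y (par (j0 + i) y)"
    and net: "\<And>c c'. c \<in> Nf j0 \<Longrightarrow> c' \<in> Nf j0 \<Longrightarrow> c \<noteq> c' \<Longrightarrow>
                (1 - \<delta>) * ldist c c' \<le> ldist (g c) (g c') \<and> ldist (g c) (g c') \<le> (1 + \<delta>) * ldist c c'"
    and r: "0 \<le> r" and \<delta>: "0 \<le> \<delta>" "\<delta> \<le> 1" and j0: "72 * r / 2 ^ j0 \<le> \<delta> * r"
    and x: "x \<in> P" and y: "y \<in> P"
  shows "ldist (g x) (g y) \<le> (1 + \<delta>) * ldist x y + \<delta> * r"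
        "(1 - \<delta>) * ldist x y - \<delta> * r \<le> ldist (g x) (g y)"
proof -
  have "\<forall>x\<in>P. \<exists>c\<in>Nf j0. ldist c x \<le> 12 * r / 2 ^ j0 \<and> ldist (g c) (g x) \<le> 12 * r / 2 ^ j0"
    by (rule chaining[OF P g Nf par top links r])
  from near_isometry_from_net[OF Nf P g _ \<delta> this net x y]
  show "ldist (g x) (g y) \<le> (1 + \<delta>) * ldist x y + \<delta> * r"
       "(1 - \<delta>) * ldist x y - \<delta> * r \<le> ldist (g x) (g y)"
    using r j0 by auto
qed

section \<open>Diversity under near-isometries\<close>

definition edge_pairs :: "real list set set \<Rightarrow> (real list \<times> real list) set" where
  "edge_pairs H = {(x, y). {x, y} \<in> H}"

definition graph_image :: "(real list \<Rightarrow> real list) \<Rightarrow> real list set set \<Rightarrow> real list set set" where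
  "graph_image g H = (\<lambda>e. g ` e) ` H"

lemma graph_weight_edge_pairs: "graph_weight H = (\<Sum>p\<in>edge_pairs H. ldist (fst p) (snd p)) / 2"
  unfolding graph_weight_def edge_pairs_def ..

lemma edge_pairs_mem:
  assumes "H \<subseteq> {e. e \<subseteq> S \<and> card e = 2}" "p \<in> edge_pairs H"
  shows "fst p \<in> S" "snd p \<in> S" "fst p \<noteq> snd p"
  using assms unfolding edge_pairs_def by (auto simp: subset_iff)

lemma edge_pairs_finite_card:
  assumes H: "H \<subseteq> {e. e \<subseteq> S \<and> card e = 2}" "finite H"
  shows "finite (edge_pairs H)" "card (edge_pairs H) \<le> 4 * card H" "card H \<le> card (edge_pairs H)"
proof -
  have e2: "card e = 2" if "e \<in> H" for e
    using H that by blast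
  then have e: "finite e" "card e = 2" if "e \<in> H" for e
    using that by (metis card.infinite zero_neq_numeral)+
  have sub: "edge_pairs H \<subseteq> (\<Union>e\<in>H. e \<times> e)" unfolding edge_pairs_def by auto
  have fin: "finite (\<Union>e\<in>H. e \<times> e)" using H(2) e by auto
  show fP: "finite (edge_pairs H)" by (rule finite_subset[OF sub fin])
  have "card (edge_pairs H) \<le> card (\<Union>e\<in>H. e \<times> e)" by (rule card_mono[OF fin sub])
  also have "\<dots> \<le> (\<Sum>e\<in>H. card (e \<times> e))" by (rule card_UN_le[OF H(2)])
  also have "\<dots> = (\<Sum>e\<in>H. 4)" by (rule sum.cong) (auto simp: card_cartesian_product e)
  finally show "card (edge_pairs H) \<le> 4 * card H" by simp
  have "H \<subseteq> (\<lambda>p. {fst p, snd p}) ` edge_pairs H"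
  proof
    fix e assume "e \<in> H"
    moreover obtain a b where "e = {a, b}" using e[OF \<open>e \<in> H\<close>] by (meson card_2_iff)
    ultimately show "e \<in> (\<lambda>p. {fst p, snd p}) ` edge_pairs H"
      unfolding edge_pairs_def by (auto intro!: image_eqI[of _ _ "(a, b)"])
  qed
  then have "card H \<le> card ((\<lambda>p. {fst p, snd p}) ` edge_pairs H)" by (intro card_mono finite_imageI fP)
  also have "\<dots> \<le> card (edge_pairs H)" by (rule card_image_le[OF fP])
  finally show "card H \<le> card (edge_pairs H)" .
qed

lemma edge_pairs_graph_image:
  assumes H: "H \<subseteq> {e. e \<subseteq> S \<and> card e = 2}"
  shows "edge_pairs (graph_image g H) = (\<lambda>p. (g (fst p), g (snd p))) ` edge_pairs H"
proof
  show "(\<lambda>p. (g (fst p), g (snd p))) ` edge_pairs H \<subseteq> edge_pairs (graph_image g H)"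
  proof
    fix p assume "p \<in> (\<lambda>p. (g (fst p), g (snd p))) ` edge_pairs H"
    then obtain a b where ab: "p = (g a, g b)" "{a, b} \<in> H" unfolding edge_pairs_def by auto
    then have "g ` {a, b} \<in> graph_image g H" unfolding graph_image_def by blast
    then show "p \<in> edge_pairs (graph_image g H)" using ab(1) unfolding edge_pairs_def by simp
  qed
  show "edge_pairs (graph_image g H) \<subseteq> (\<lambda>p. (g (fst p), g (snd p))) ` edge_pairs H"
  proof
    fix p assume "p \<in> edge_pairs (graph_image g H)"
    then obtain u v e where p: "p = (u, v)" "e \<in> H" "{u, v} = g ` e"
      unfolding edge_pairs_def graph_image_def by auto
    obtain a b where e: "e = {a, b}" using H p(2) by (auto simp: card_2_iff)
    then have "(u = g a \<and> v = g b) \<or> (u = g b \<and> v = g a)" using p(3) by (auto simp: doubleton_eq_iff)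
    moreover have "(a, b) \<in> edge_pairs H" "(b, a) \<in> edge_pairs H"
      using p(2) e unfolding edge_pairs_def by (auto simp: insert_commute)
    ultimately show "p \<in> (\<lambda>p. (g (fst p), g (snd p))) ` edge_pairs H" using p(1) by force
  qed
qed

lemma graph_weight_graph_image:
  assumes H: "H \<subseteq> {e. e \<subseteq> S \<and> card e = 2}" and inj: "inj_on g S"
  shows "graph_weight (graph_image g H) = (\<Sum>p\<in>edge_pairs H. ldist (g (fst p)) (g (snd p))) / 2"
proof -
  have "inj_on (\<lambda>p. (g (fst p), g (snd p))) (edge_pairs H)"
    using edge_pairs_mem[OF H] inj by (auto simp: inj_on_def prod_eq_iff)
  then show ?thesis
    unfolding graph_weight_edge_pairs edge_pairs_graph_image[OF H] by (simp add: sum.reindex)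
qed

lemma graph_weight_graph_image_le:
  assumes H: "H \<subseteq> {e. e \<subseteq> S \<and> card e = 2}" "finite H" and inj: "inj_on g S" and b: "0 \<le> b"
    and le: "\<And>x y. x \<in> S \<Longrightarrow> y \<in> S \<Longrightarrow> x \<noteq> y \<Longrightarrow> ldist (g x) (g y) \<le> a * ldist x y + b"
  shows "graph_weight (graph_image g H) \<le> a * graph_weight H + 2 * real (card H) * b"
proof -
  let ?E = "edge_pairs H"
  have "(\<Sum>p\<in>?E. ldist (g (fst p)) (g (snd p))) \<le> (\<Sum>p\<in>?E. a * ldist (fst p) (snd p) + b)"
    using le edge_pairs_mem[OF H(1)] by (intro sum_mono) auto
  moreover have "(\<Sum>p\<in>?E. a * ldist (fst p) (snd p) + b)
                 = a * (\<Sum>p\<in>?E. ldist (fst p) (snd p)) + real (card ?E) * b"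
    by (simp add: sum.distrib sum_distrib_left)
  moreover have "a * (\<Sum>p\<in>?E. ldist (fst p) (snd p)) = 2 * (a * graph_weight H)"
    by (simp add: graph_weight_edge_pairs)
  moreover have "real (card ?E) * b \<le> 4 * real (card H) * b"
    using edge_pairs_finite_card(2)[OF H] b by (intro mult_right_mono) linarith+
  ultimately show ?thesis using graph_weight_graph_image[OF H(1) inj] by linarith
qed

lemma graph_weight_graph_image_ge:
  assumes H: "H \<subseteq> {e. e \<subseteq> S \<and> card e = 2}" "finite H" and inj: "inj_on g S" and b: "0 \<le> b"
    and ge: "\<And>x y. x \<in> S \<Longrightarrow> y \<in> S \<Longrightarrow> x \<noteq> y \<Longrightarrow> a * ldist x y - b \<le> ldist (g x) (g y)"
  shows "a * graph_weight H - 2 * real (card H) * b \<le> graph_weight (graph_image g H)"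
proof -
  let ?E = "edge_pairs H"
  have "(\<Sum>p\<in>?E. a * ldist (fst p) (snd p) - b) \<le> (\<Sum>p\<in>?E. ldist (g (fst p)) (g (snd p)))"
    using ge edge_pairs_mem[OF H(1)] by (intro sum_mono) auto
  moreover have "(\<Sum>p\<in>?E. a * ldist (fst p) (snd p) - b)
                 = a * (\<Sum>p\<in>?E. ldist (fst p) (snd p)) - real (card ?E) * b"
    by (simp add: sum_subtractf sum_distrib_left)
  moreover have "a * (\<Sum>p\<in>?E. ldist (fst p) (snd p)) = 2 * (a * graph_weight H)"
    by (simp add: graph_weight_edge_pairs)
  moreover have "real (card ?E) * b \<le> 4 * real (card H) * b"
    using edge_pairs_finite_card(2)[OF H] b by (intro mult_right_mono) linarith+
  ultimately show ?thesis using graph_weight_graph_image[OF H(1) inj] by linarith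
qed

lemma graph_weight_ge_separated:
  assumes H: "H \<subseteq> {e. e \<subseteq> S \<and> card e = 2}" "finite H" and r: "0 \<le> r"
    and sep: "\<And>x y. x \<in> S \<Longrightarrow> y \<in> S \<Longrightarrow> x \<noteq> y \<Longrightarrow> r \<le> ldist x y"
  shows "real (card H) * r / 2 \<le> graph_weight H"
proof -
  have "real (card H) * r \<le> real (card (edge_pairs H)) * r"
    using edge_pairs_finite_card(3)[OF H] r by (intro mult_right_mono) auto
  also have "\<dots> \<le> (\<Sum>p\<in>edge_pairs H. ldist (fst p) (snd p))"
    using sum_mono[of "edge_pairs H" "\<lambda>_. r" "\<lambda>p. ldist (fst p) (snd p)"] sep edge_pairs_mem[OF H(1)]
    by auto
  finally show ?thesis unfolding graph_weight_edge_pairs by simp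
qed

lemma extremum_le_affine:
  fixes f h :: "'a \<Rightarrow> real"
  assumes X: "finite X" "X \<noteq> {}" and c: "0 \<le> c" and le: "\<And>x. x \<in> X \<Longrightarrow> f x \<le> c * h x + b"
  shows "(if mx then Max (f ` X) else Min (f ` X)) \<le> c * (if mx then Max (h ` X) else Min (h ` X)) + b"
proof (cases mx)
  case True
  have "f x \<le> c * Max (h ` X) + b" if "x \<in> X" for x
    using le[OF that] mult_left_mono[OF Max_ge[of "h ` X" "h x"] c] X that by force
  then show ?thesis using True X by (simp add: Max_le_iff)
next
  case False
  have "Min (h ` X) \<in> h ` X" using X by (intro Min_in) auto
  then obtain x where x: "x \<in> X" "Min (h ` X) = h x" by auto
  moreover have "Min (f ` X) \<le> f x" using X x(1) by simp
  ultimately show ?thesis using False le[OF x(1)] by simp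
qed

lemma extremum_ge_affine:
  fixes f h :: "'a \<Rightarrow> real"
  assumes X: "finite X" "X \<noteq> {}" and c: "0 \<le> c" and ge: "\<And>x. x \<in> X \<Longrightarrow> c * h x - b \<le> f x"
  shows "c * (if mx then Max (h ` X) else Min (h ` X)) - b \<le> (if mx then Max (f ` X) else Min (f ` X))"
proof (cases mx)
  case True
  have "Max (h ` X) \<in> h ` X" using X by (intro Max_in) auto
  then obtain x where x: "x \<in> X" "Max (h ` X) = h x" by auto
  moreover have "f x \<le> Max (f ` X)" using X x(1) by simp
  ultimately show ?thesis using True ge[OF x(1)] by simp
next
  case False
  have "c * Min (h ` X) - b \<le> f x" if "x \<in> X" for x
    using ge[OF that] mult_left_mono[OF Min_le[of "h ` X" "h x"] c] X that by force
  then show ?thesis using False X by (simp add: Min_ge_iff)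
qed

lemma property_P_graphs:
  assumes "property_P k l F" "finite S" "card S = k"
  shows "F S \<noteq> {}" "finite (F S)"
    "\<And>H. H \<in> F S \<Longrightarrow> H \<subseteq> {e. e \<subseteq> S \<and> card e = 2} \<and> card H = l \<and> finite H"
proof -
  have F: "F S \<noteq> {}" "\<And>H. H \<in> F S \<Longrightarrow> H \<subseteq> {e. e \<subseteq> S \<and> card e = 2} \<and> card H = l"
    using assms unfolding property_P_def by blast+
  show "F S \<noteq> {}" by (rule F(1))
  have "F S \<subseteq> Pow (Pow S)" using F(2) by blast
  then show "finite (F S)" using assms(2) by (metis finite_Pow_iff finite_subset)
  show "H \<subseteq> {e. e \<subseteq> S \<and> card e = 2} \<and> card H = l \<and> finite H" if "H \<in> F S" for H
    using F(2)[OF that] assms(2) finite_subset[of H "Pow S"] by auto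
qed

lemma div_val_image:
  assumes "property_P k l F" "finite S" "card S = k" "inj_on g S"
  shows "div_val mx F (g ` S) =
    (if mx then Max ((\<lambda>H. graph_weight (graph_image g H)) ` F S)
     else Min ((\<lambda>H. graph_weight (graph_image g H)) ` F S))"
proof -
  have "bij_betw g S (g ` S)" using assms(4) by (simp add: bij_betw_def)
  moreover have "\<forall>S S' \<sigma>. finite S \<and> card S = k \<and> bij_betw \<sigma> S S' \<longrightarrow>
                   F S' = (\<lambda>H. (\<lambda>e. \<sigma> ` e) ` H) ` F S"
    using assms(1) unfolding property_P_def by (rule conjunct2[THEN conjunct2])
  ultimately have "F (g ` S) = graph_image g ` F S"
    using assms(2,3) unfolding graph_image_def by blast
  then show ?thesis unfolding div_val_def by (simp add: image_image)
qed

lemma div_val_image_le: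
  assumes P: "property_P k l F" and S: "finite S" "card S = k" and inj: "inj_on g S"
    and a: "0 \<le> a" and b: "0 \<le> b"
    and le: "\<And>x y. x \<in> S \<Longrightarrow> y \<in> S \<Longrightarrow> x \<noteq> y \<Longrightarrow> ldist (g x) (g y) \<le> a * ldist x y + b"
  shows "div_val mx F (g ` S) \<le> a * div_val mx F S + 2 * real l * b"
proof -
  note F = property_P_graphs[OF P S]
  have "graph_weight (graph_image g H) \<le> a * graph_weight H + 2 * real l * b" if "H \<in> F S" for H
    using graph_weight_graph_image_le[of H S g b a] F(3)[OF that] inj b le by auto
  then have "(if mx then Max ((\<lambda>H. graph_weight (graph_image g H)) ` F S)
              else Min ((\<lambda>H. graph_weight (graph_image g H)) ` F S))
             \<le> a * (if mx then Max (graph_weight ` F S) else Min (graph_weight ` F S)) + 2 * real l * b"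
    by (intro extremum_le_affine F(2,1) a)
  then show ?thesis unfolding div_val_image[OF P S inj] by (simp add: div_val_def)
qed

lemma div_val_image_ge:
  assumes P: "property_P k l F" and S: "finite S" "card S = k" and inj: "inj_on g S"
    and a: "0 \<le> a" and b: "0 \<le> b"
    and ge: "\<And>x y. x \<in> S \<Longrightarrow> y \<in> S \<Longrightarrow> x \<noteq> y \<Longrightarrow> a * ldist x y - b \<le> ldist (g x) (g y)"
  shows "a * div_val mx F S - 2 * real l * b \<le> div_val mx F (g ` S)"
proof -
  note F = property_P_graphs[OF P S]
  have "a * graph_weight H - 2 * real l * b \<le> graph_weight (graph_image g H)" if "H \<in> F S" for H
    using graph_weight_graph_image_ge[of H S g b a] F(3)[OF that] inj b ge by auto
  then have "a * (if mx then Max (graph_weight ` F S) else Min (graph_weight ` F S)) - 2 * real l * b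
             \<le> (if mx then Max ((\<lambda>H. graph_weight (graph_image g H)) ` F S)
                 else Min ((\<lambda>H. graph_weight (graph_image g H)) ` F S))"
    by (intro extremum_ge_affine F(2,1) a)
  then show ?thesis unfolding div_val_image[OF P S inj] by (simp add: div_val_def)
qed

lemma div_val_ge_separated:
  assumes P: "property_P k l F" and S: "finite S" "card S = k" and r: "0 \<le> r"
    and sep: "\<And>x y. x \<in> S \<Longrightarrow> y \<in> S \<Longrightarrow> x \<noteq> y \<Longrightarrow> r \<le> ldist x y"
  shows "real l * r / 2 \<le> div_val mx F S"
proof -
  note F = property_P_graphs[OF P S]
  have lower: "real l * r / 2 \<le> graph_weight H" if "H \<in> F S" for H
    using graph_weight_ge_separated[OF _ _ r sep] F(3)[OF that] by auto
  obtain H where H: "H \<in> F S" using F(1) by blast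
  show ?thesis
  proof (cases mx)
    case True
    have "graph_weight H \<le> Max (graph_weight ` F S)" using F(2) H by simp
    then show ?thesis using True lower[OF H] by (simp add: div_val_def)
  next
    case False
    have "real l * r / 2 \<le> Min (graph_weight ` F S)" using lower F(1,2) by (subst Min_ge_iff) auto
    then show ?thesis using False by (simp add: div_val_def)
  qed
qed

lemma finite_card_subsets: "finite Q \<Longrightarrow> finite {S. S \<subseteq> Q \<and> card S = k}"
  by (rule finite_subset[of _ "Pow Q"]) auto

lemma div_opt_eq_Max: "div_opt k mx F Q = Max (div_val mx F ` {S. S \<subseteq> Q \<and> card S = k})"
  unfolding div_opt_def by (simp add: setcompr_eq_image)

lemma div_val_le_div_opt:
  "finite Q \<Longrightarrow> S \<subseteq> Q \<Longrightarrow> card S = k \<Longrightarrow> div_val mx F S \<le> div_opt k mx F Q"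
  unfolding div_opt_eq_Max by (rule Max_ge) (auto intro: finite_card_subsets)

lemma div_opt_attained:
  assumes "finite Q" "k \<le> card Q"
  obtains S where "S \<subseteq> Q" "card S = k" "div_val mx F S = div_opt k mx F Q"
proof -
  obtain S0 where "S0 \<subseteq> Q" "card S0 = k" "finite S0" by (rule obtain_subset_with_card_n[OF assms(2)])
  then have "div_opt k mx F Q \<in> div_val mx F ` {S. S \<subseteq> Q \<and> card S = k}"
    unfolding div_opt_eq_Max using assms(1) by (intro Max_in finite_imageI finite_card_subsets) auto
  then show ?thesis using that by auto
qed

lemma div_opt_ge_separated:
  assumes P: "property_P k l F" and fin: "finite Q" and S: "S \<subseteq> Q" "card S = k" and r: "0 \<le> r"
    and sep: "\<And>x y. x \<in> S \<Longrightarrow> y \<in> S \<Longrightarrow> x \<noteq> y \<Longrightarrow> r \<le> ldist x y"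
  shows "real l * r / 2 \<le> div_opt k mx F Q"
proof -
  have "real l * r / 2 \<le> div_val mx F S"
    using sep by (rule div_val_ge_separated[OF P finite_subset[OF S(1) fin] S(2) r])
  then show ?thesis using div_val_le_div_opt[OF fin S, of mx F] by linarith
qed

lemma div_opt_image_ge:
  assumes P: "property_P k l F" and fin: "finite Q" and k: "k \<le> card Q" and inj: "inj_on g Q"
    and a: "0 \<le> a" and b: "0 \<le> b"
    and ge: "\<And>x y. x \<in> Q \<Longrightarrow> y \<in> Q \<Longrightarrow> x \<noteq> y \<Longrightarrow> a * ldist x y - b \<le> ldist (g x) (g y)"
  shows "a * div_opt k mx F Q - 2 * real l * b \<le> div_opt k mx F (g ` Q)"
proof -
  obtain S where S: "S \<subseteq> Q" "card S = k" "div_val mx F S = div_opt k mx F Q"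
    by (rule div_opt_attained[OF fin k])
  have "a * div_val mx F S - 2 * real l * b \<le> div_val mx F (g ` S)"
    using S fin inj ge by (intro div_val_image_ge[OF P _ _ _ a b]) (auto intro: finite_subset inj_on_subset)
  also have "\<dots> \<le> div_opt k mx F (g ` Q)"
    using S inj fin by (intro div_val_le_div_opt) (auto simp: card_image inj_on_subset)
  finally show ?thesis using S(3) by simp
qed

lemma approximation_ratio_transfer:
  fixes opt w v opt' e \<epsilon> \<delta> :: real
  assumes \<delta>: "\<delta> = \<epsilon> / 128" and \<epsilon>: "0 < \<epsilon>" "\<epsilon> < 1" and opt: "0 \<le> opt"
    and e: "0 \<le> e" "e \<le> 4 * \<delta> * opt"
    and v: "v \<le> (1 + \<delta>) * w + e" and opt': "(1 - \<delta>) * opt - e \<le> opt'" and approx: "opt' / (1 + \<epsilon>) \<le> v"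
  shows "opt / (1 + 2 * \<epsilon>) \<le> w"
proof -
  have "(1 - \<delta>) * opt - e \<le> (1 + \<epsilon>) * ((1 + \<delta>) * w + e)"
    using opt' approx v \<epsilon> by (smt (verit) divide_le_eq mult_left_mono mult.commute)
  moreover have "(2 + \<epsilon>) * e \<le> 12 * \<delta> * opt"
    using e \<epsilon> mult_right_mono[of "2 + \<epsilon>" 3 e] by linarith
  ultimately have opt_le: "(1 - 13 * \<delta>) * opt \<le> (1 + \<epsilon>) * (1 + \<delta>) * w"
    by (simp add: algebra_simps)
  have factor_le: "(1 + \<epsilon>) * (1 + \<delta>) \<le> (1 - 13 * \<delta>) * (1 + 2 * \<epsilon>)"
  proof -
    have "\<epsilon> * \<delta> = \<epsilon> * \<epsilon> / 128" "\<epsilon> * \<epsilon> \<le> \<epsilon>"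
      using \<delta> \<epsilon> by (auto intro: mult_left_le)
    moreover have "(1 + \<epsilon>) * (1 + \<delta>) = 1 + \<epsilon> + \<delta> + \<epsilon> * \<delta>"
      "(1 - 13 * \<delta>) * (1 + 2 * \<epsilon>) = 1 + 2 * \<epsilon> - 13 * \<delta> - 26 * (\<epsilon> * \<delta>)"
      by (simp_all add: algebra_simps)
    ultimately show ?thesis using \<delta> \<epsilon> by linarith
  qed
  have "(1 + \<epsilon>) * (1 + \<delta>) * opt \<le> (1 - 13 * \<delta>) * (1 + 2 * \<epsilon>) * opt"
    using factor_le opt by (rule mult_right_mono)
  also have "\<dots> = (1 + 2 * \<epsilon>) * ((1 - 13 * \<delta>) * opt)" by simp
  also have "\<dots> \<le> (1 + 2 * \<epsilon>) * ((1 + \<epsilon>) * (1 + \<delta>) * w)"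
    using opt_le \<epsilon> by (intro mult_left_mono) auto
  finally have "(1 + \<epsilon>) * (1 + \<delta>) * opt \<le> (1 + \<epsilon>) * (1 + \<delta>) * ((1 + 2 * \<epsilon>) * w)"
    by (simp add: algebra_simps)
  moreover have "0 < (1 + \<epsilon>) * (1 + \<delta>)" using \<epsilon> \<delta> by simp
  ultimately have "opt \<le> (1 + 2 * \<epsilon>) * w" using mult_le_cancel_left_pos by blast
  then show ?thesis using \<epsilon> by (simp add: divide_le_eq mult.commute)
qed

lemma div_opt_approx_of_near_isometry:
  assumes P: "property_P k l F" and fin: "finite Q" and k: "k \<le> card Q" and inj: "inj_on g Q"
    and \<delta>: "\<delta> = \<epsilon> / 128" and \<epsilon>: "0 < \<epsilon>" "\<epsilon> < 1"
    and r: "0 < r" and Ss: "Ss \<subseteq> Q" "card Ss = k" "\<And>x y. x \<in> Ss \<Longrightarrow> y \<in> Ss \<Longrightarrow> x \<noteq> y \<Longrightarrow> r \<le> ldist x y"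
    and le: "\<And>x y. x \<in> Q \<Longrightarrow> y \<in> Q \<Longrightarrow> x \<noteq> y \<Longrightarrow> ldist (g x) (g y) \<le> (1 + \<delta>) * ldist x y + \<delta> * r"
    and ge: "\<And>x y. x \<in> Q \<Longrightarrow> y \<in> Q \<Longrightarrow> x \<noteq> y \<Longrightarrow> (1 - \<delta>) * ldist x y - \<delta> * r \<le> ldist (g x) (g y)"
    and S: "S \<subseteq> Q" "card S = k" "div_opt k mx F (g ` Q) / (1 + \<epsilon>) \<le> div_val mx F (g ` S)"
  shows "div_opt k mx F Q / (1 + 2 * \<epsilon>) \<le> div_val mx F S"
proof -
  have \<delta>0: "0 \<le> \<delta>" "\<delta> \<le> 1" using \<delta> \<epsilon> by auto
  \<comment> \<open>the additive error \<delta> r per edge is relative to the optimum, which is at least l r / 2\<close>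
  have lower: "real l * r / 2 \<le> div_opt k mx F Q"
    using div_opt_ge_separated[OF P fin Ss(1,2)] Ss(3) r by auto
  have "0 \<le> real l * r / 2" using r by simp
  with lower have opt0: "0 \<le> div_opt k mx F Q" by linarith
  have err: "0 \<le> 2 * real l * (\<delta> * r)" "2 * real l * (\<delta> * r) \<le> 4 * \<delta> * div_opt k mx F Q"
    using \<delta>0 r mult_left_mono[OF lower \<delta>0(1)] by (simp_all add: algebra_simps)
  have "div_val mx F (g ` S) \<le> (1 + \<delta>) * div_val mx F S + 2 * real l * (\<delta> * r)"
    using S fin inj le \<delta>0 r
    by (intro div_val_image_le[OF P]) (auto intro: finite_subset inj_on_subset)
  moreover have "(1 - \<delta>) * div_opt k mx F Q - 2 * real l * (\<delta> * r) \<le> div_opt k mx F (g ` Q)"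
    using ge \<delta>0 r by (intro div_opt_image_ge[OF P fin k inj]) auto
  ultimately show ?thesis
    using approximation_ratio_transfer[OF \<delta> \<epsilon> opt0 err] S(3) by blast
qed

section \<open>Numerical bounds\<close>

lemma pow2_ceiling_log:
  fixes x :: real
  assumes "1 \<le> x"
  obtains j :: nat where "x \<le> 2 ^ j" "real j \<le> log 2 x + 1"
proof
  have log: "0 \<le> log 2 x" using assms by simp
  show "real (nat \<lceil>log 2 x\<rceil>) \<le> log 2 x + 1" using log by linarith
  have "x = 2 powr (log 2 x)" using assms by simp
  also have "\<dots> \<le> 2 powr (real (nat \<lceil>log 2 x\<rceil>))" using log by (intro powr_mono) linarith+
  finally show "x \<le> 2 ^ nat \<lceil>log 2 x\<rceil>" by (simp add: powr_realpow)
qed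

lemma jl_level_log_bound:
  fixes \<epsilon> :: real and j0 :: nat
  assumes \<epsilon>: "0 < \<epsilon>" "\<epsilon> < 1" and j0: "real j0 \<le> log 2 (9216 / \<epsilon>) + 1"
  shows "(real j0 + 1) * ln 2 \<le> 16 * ln (2 / \<epsilon>)"
proof -
  have "ln (9216 / \<epsilon>) = ln 4608 + ln (2 / \<epsilon>)"
    using \<epsilon> ln_mult[of 4608 "2 / \<epsilon>"] by simp
  moreover have "ln (18432 :: real) = ln 4608 + 2 * ln 2"
    using ln_mult[of 4608 4] ln_realpow[of 2 2] by simp
  moreover have "ln (18432 :: real) \<le> 15 * ln 2"
  proof -
    have "ln (18432 :: real) \<le> ln (2 ^ 15)" by simp
    also have "\<dots> = 15 * ln 2" using ln_realpow[of "2::real" 15] by simp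
    finally show ?thesis .
  qed
  moreover have "ln 2 \<le> ln (2 / \<epsilon>)" using \<epsilon> by (simp add: le_divide_eq)
  moreover have "(real j0 + 1) * ln 2 \<le> (log 2 (9216 / \<epsilon>) + 2) * ln 2"
    using j0 by (intro mult_right_mono) auto
  moreover have "log 2 (9216 / \<epsilon>) * ln 2 = ln (9216 / \<epsilon>)" by (simp add: log_def)
  ultimately show ?thesis by (simp add: algebra_simps)
qed

lemma jl_count_le_exp:
  fixes \<epsilon> :: real and t k lam j0 :: nat
  assumes \<epsilon>: "0 < \<epsilon>" "\<epsilon> < 1" and k: "2 \<le> k"
    and t: "2 ^ 20 / \<epsilon>\<^sup>2 * (real lam * ln (2 / \<epsilon>) + ln (real k)) \<le> real t"
    and j0: "real j0 \<le> log 2 (9216 / \<epsilon>) + 1"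
  shows "12 * real k ^ 2 * 4 ^ (lam * (j0 + 1)) \<le> exp (real t * (\<epsilon> / 128)\<^sup>2 / 2)"
proof -
  have lnk: "0 \<le> ln (real k)" using k by simp
  have "ln (12::real) \<le> ln (real k ^ 4)"
    using k power_mono[of 2 "real k" 4] by (subst ln_le_cancel_iff) auto
  then have ln12: "ln 12 \<le> 4 * ln (real k)" using k by (simp add: ln_realpow)
  have "ln (12 * real k ^ 2 * 4 ^ (lam * (j0 + 1)))
        = ln 12 + 2 * ln (real k) + real lam * ((real j0 + 1) * (2 * ln 2))"
    using k ln_realpow[of 2 2] by (simp add: ln_mult ln_realpow algebra_simps)
  also have "\<dots> \<le> 32 * (real lam * ln (2 / \<epsilon>) + ln (real k))"
    using jl_level_log_bound[OF \<epsilon> j0] ln12 lnk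
      mult_left_mono[of "(real j0 + 1) * (2 * ln 2)" "32 * ln (2 / \<epsilon>)" "real lam"]
    by (simp add: algebra_simps)
  also have "\<dots> \<le> real t * (\<epsilon> / 128)\<^sup>2 / 2"
  proof -
    have "2 ^ 20 / \<epsilon>\<^sup>2 * (real lam * ln (2 / \<epsilon>) + ln (real k)) * \<epsilon>\<^sup>2 \<le> real t * \<epsilon>\<^sup>2"
      using t by (rule mult_right_mono) simp
    moreover have "2 ^ 20 / \<epsilon>\<^sup>2 * (real lam * ln (2 / \<epsilon>) + ln (real k)) * \<epsilon>\<^sup>2
                   = 1048576 * (real lam * ln (2 / \<epsilon>) + ln (real k))"
      using \<epsilon> by simp
    moreover have "real t * (\<epsilon> / 128)\<^sup>2 / 2 = real t * \<epsilon>\<^sup>2 / 32768"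
      by (simp add: power_divide)
    ultimately show ?thesis by linarith
  qed
  finally show ?thesis
    using k by (subst ln_le_cancel_iff[symmetric]) auto
qed

lemma jl_net_failure_le:
  fixes k lam j0 t :: nat and \<delta> :: real
  assumes k: "1 \<le> k" and W: "12 * real k ^ 2 * 4 ^ (lam * (j0 + 1)) \<le> exp (real t * \<delta>\<^sup>2 / 2)"
  shows "2 * (real k * 2 ^ (lam * j0))\<^sup>2 * exp (- (real t / 2) * \<delta>\<^sup>2) \<le> 1 / 6"
proof -
  define W where "W = 12 * real k ^ 2 * 4 ^ (lam * (j0 + 1))"
  have W0: "0 < W" using k by (simp add: W_def)
  have "exp (- (real t / 2) * \<delta>\<^sup>2) = 1 / exp (real t * \<delta>\<^sup>2 / 2)" by (simp add: exp_minus field_simps)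
  also have "\<dots> \<le> 1 / W" using W W0 unfolding W_def by (intro divide_left_mono) auto
  finally have "exp (- (real t / 2) * \<delta>\<^sup>2) \<le> 1 / W" .
  moreover have "2 * (real k * 2 ^ (lam * j0))\<^sup>2 \<le> W / 6"
  proof -
    have "((2::real) ^ n)\<^sup>2 = 4 ^ n" for n
      by (induction n) (auto simp: power2_eq_square algebra_simps)
    then have "(real k * 2 ^ (lam * j0))\<^sup>2 = real k ^ 2 * 4 ^ (lam * j0)"
      by (simp add: power_mult_distrib)
    also have "\<dots> \<le> real k ^ 2 * 4 ^ (lam * (j0 + 1))"
      by (intro mult_left_mono power_increasing) auto
    finally show ?thesis unfolding W_def by simp
  qed
  ultimately have "2 * (real k * 2 ^ (lam * j0))\<^sup>2 * exp (- (real t / 2) * \<delta>\<^sup>2) \<le> W / 6 * (1 / W)"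
    using W0 by (intro mult_mono) auto
  then show ?thesis using W0 by simp
qed

lemma jl_chain_failure_le:
  fixes k lam j0 t L :: nat
  assumes k: "1 \<le> k" and W: "12 * real k ^ 2 * 4 ^ (lam * (j0 + 1)) \<le> exp (real t / 2)"
  shows "(\<Sum>i<L. real k * 2 ^ (lam * (j0 + i + 1)) * exp (- (real t / 2) * (1 + real i)\<^sup>2)) \<le> 1 / 6"
proof -
  define W where "W = 12 * real k ^ 2 * 4 ^ (lam * (j0 + 1))"
  define q where "q = exp (- (real t / 2))"
  have W0: "0 < W" using k by (simp add: W_def)
  have "q = 1 / exp (real t / 2)" by (simp add: q_def exp_minus field_simps)
  also have "\<dots> \<le> 1 / W" using W W0 unfolding W_def by (intro divide_left_mono) auto
  finally have q: "0 \<le> q" "q \<le> 1 / W" by (auto simp: q_def)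
  have bounds: "real k * 2 ^ (lam * (j0 + 1)) \<le> W / 12" "2 ^ lam \<le> W / 12"
  proof -
    have "(2::real) ^ (lam * (j0 + 1)) \<le> 4 ^ (lam * (j0 + 1))" by (intro power_mono) auto
    moreover have "(2::real) ^ lam \<le> 4 ^ (lam * (j0 + 1))"
    proof -
      have "(2::real) ^ lam \<le> 4 ^ lam" by (rule power_mono) auto
      also have "\<dots> \<le> 4 ^ (lam * (j0 + 1))" by (rule power_increasing) auto
      finally show ?thesis .
    qed
    moreover have "real k \<le> real k ^ 2" "1 \<le> real k ^ 2"
      using k power_increasing[of 1 2 "real k"] one_le_power[of "real k" 2] by auto
    ultimately show "real k * 2 ^ (lam * (j0 + 1)) \<le> W / 12" "2 ^ lam \<le> W / 12"
      unfolding W_def by (auto intro: mult_mono order.trans[OF _ mult_right_mono[of 1]])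
  qed
  have "real k * 2 ^ (lam * (j0 + 1)) * q \<le> W / 12 * (1 / W)" "2 ^ lam * q \<le> W / 12 * (1 / W)"
    by (rule mult_mono; use bounds q W0 in simp)+
  then have ratio: "real k * 2 ^ (lam * (j0 + 1)) * q \<le> 1 / 12" "2 ^ lam * q \<le> 1 / 2"
    using W0 by auto
  \<comment> \<open>the link failures decay geometrically in the level i\<close>
  have term_le: "real k * 2 ^ (lam * (j0 + i + 1)) * exp (- (real t / 2) * (1 + real i)\<^sup>2)
                 \<le> (1 / 12) * (1 / 2) ^ i" for i
  proof -
    have "exp (- (real t / 2) * (1 + real i)\<^sup>2) \<le> exp (- (real t / 2) * (1 + real i))"
      by (simp add: power2_eq_square mult_left_mono)
    also have "\<dots> = q * q ^ i" by (simp add: q_def exp_of_nat_mult[symmetric] mult_exp_exp algebra_simps)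
    finally have e: "exp (- (real t / 2) * (1 + real i)\<^sup>2) \<le> q * q ^ i" .
    have split: "real k * 2 ^ (lam * (j0 + i + 1)) = (real k * 2 ^ (lam * (j0 + 1))) * (2 ^ lam) ^ i"
      by (simp add: power_add power_mult[symmetric] algebra_simps)
    have "real k * 2 ^ (lam * (j0 + i + 1)) * exp (- (real t / 2) * (1 + real i)\<^sup>2)
          \<le> (real k * 2 ^ (lam * (j0 + 1))) * (2 ^ lam) ^ i * (q * q ^ i)"
      unfolding split by (rule mult_left_mono[OF e]) simp
    also have "\<dots> = (real k * 2 ^ (lam * (j0 + 1)) * q) * (2 ^ lam * q) ^ i"
      by (simp add: power_mult_distrib algebra_simps)
    also have "\<dots> \<le> (1 / 12) * (1 / 2) ^ i"
      using ratio q by (intro mult_mono power_mono) auto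
    finally show ?thesis .
  qed
  have "(\<Sum>i<L. real k * 2 ^ (lam * (j0 + i + 1)) * exp (- (real t / 2) * (1 + real i)\<^sup>2))
        \<le> (\<Sum>i<L. (1 / 12) * (1 / 2) ^ i)"
    by (intro sum_mono term_le)
  also have "\<dots> = (1 / 12) * (\<Sum>i<L. (1 / 2) ^ i)" by (simp add: sum_distrib_left)
  also have "(\<Sum>i<L. (1 / 2 :: real) ^ i) = 2 - 2 * (1 / 2) ^ L"
    by (induction L) (auto simp: algebra_simps)
  also have "(1 / 12) * (2 - 2 * (1 / 2 :: real) ^ L) \<le> 1 / 6" by simp
  finally show ?thesis .
qed

lemma jl_hierarchy_good_event:
  fixes \<epsilon> :: real and t k lam j0 L :: nat
    and Nf :: "nat \<Rightarrow> real list set" and par :: "nat \<Rightarrow> real list \<Rightarrow> real list"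
  assumes \<epsilon>: "0 < \<epsilon>" "\<epsilon> < 1" and k: "2 \<le> k"
    and t: "2 ^ 20 / \<epsilon>\<^sup>2 * (real lam * ln (2 / \<epsilon>) + ln (real k)) \<le> real t"
    and P: "finite P" "P \<subseteq> {x. length x = d}"
    and Nf: "\<And>m. Nf m \<subseteq> P" "\<And>m. card (Nf m) \<le> k * 2 ^ (lam * m)"
    and par: "\<And>m y. y \<in> P \<Longrightarrow> par m y \<in> Nf m"
    and j0: "real j0 \<le> log 2 (9216 / \<epsilon>) + 1"
  obtains A where "A \<in> sets (gauss_jl t d)" "2 / 3 \<le> measure (gauss_jl t d) A"
    "\<And>G. G \<in> A \<Longrightarrow> inj_on (jl_apply t d G) P"
    "\<And>G c c'. G \<in> A \<Longrightarrow> c \<in> Nf j0 \<Longrightarrow> c' \<in> Nf j0 \<Longrightarrow> c \<noteq> c' \<Longrightarrow>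
       (1 - \<epsilon> / 128) * ldist c c' \<le> ldist (jl_apply t d G c) (jl_apply t d G c') \<and>
       ldist (jl_apply t d G c) (jl_apply t d G c') \<le> (1 + \<epsilon> / 128) * ldist c c'"
    "\<And>G i y. G \<in> A \<Longrightarrow> i < L \<Longrightarrow> y \<in> Nf (j0 + i + 1) \<Longrightarrow>
       ldist (jl_apply t d G y) (jl_apply t d G (par (j0 + i) y)) \<le> (2 + real i) * ldist y (par (j0 + i) y)"
proof -
  define \<delta> where "\<delta> = \<epsilon> / 128"
  have \<delta>: "0 < \<delta>" "\<delta> < 1" using \<epsilon> by (auto simp: \<delta>_def)
  have "0 \<le> ln (2 / \<epsilon>)" "0 < ln (real k)" using \<epsilon> k by simp_all
  then have "0 < 2 ^ 20 / \<epsilon>\<^sup>2 * (real lam * ln (2 / \<epsilon>) + ln (real k))"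
    using \<epsilon> by (simp add: add_nonneg_pos)
  then have "0 < real t" using t by (rule less_le_trans)
  then have t0: "0 < t" by simp
  define E where "E i = (\<lambda>y. (y, par (j0 + i) y)) ` {y \<in> Nf (j0 + i + 1). y \<noteq> par (j0 + i) y}" for i
  have E: "E i \<subseteq> off_diagonal P" for i
  proof
    fix p assume "p \<in> E i"
    then obtain y where y: "p = (y, par (j0 + i) y)" "y \<in> Nf (j0 + i + 1)" "y \<noteq> par (j0 + i) y"
      unfolding E_def by blast
    moreover have "y \<in> P" using y(2) Nf(1) by blast
    moreover have "par (j0 + i) y \<in> P" using par[OF \<open>y \<in> P\<close>] Nf(1) by blast
    ultimately show "p \<in> off_diagonal P" by (simp add: off_diagonal_def)
  qed
  obtain A where A: "A \<in> sets (gauss_jl t d)"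
    "1 - (2 * real (card (Nf j0)) ^ 2 * exp (- (real t / 2) * \<delta>\<^sup>2)
          + (\<Sum>i<L. real (card (E i)) * exp (- (real t / 2) * (1 + real i)\<^sup>2))) \<le> measure (gauss_jl t d) A"
    and good: "\<And>G. G \<in> A \<Longrightarrow> inj_on (jl_apply t d G) P"
    "\<And>G x y. G \<in> A \<Longrightarrow> x \<in> Nf j0 \<Longrightarrow> y \<in> Nf j0 \<Longrightarrow> x \<noteq> y \<Longrightarrow>
       (1 - \<delta>) * ldist x y \<le> ldist (jl_apply t d G x) (jl_apply t d G y) \<and>
       ldist (jl_apply t d G x) (jl_apply t d G y) \<le> (1 + \<delta>) * ldist x y"
    "\<And>G i p. G \<in> A \<Longrightarrow> i < L \<Longrightarrow> p \<in> E i \<Longrightarrow>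
       ldist (jl_apply t d G (fst p)) (jl_apply t d G (snd p)) \<le> (2 + real i) * ldist (fst p) (snd p)"
    using jl_good_event[OF t0 P Nf(1)[of j0] \<delta>, where L = L and E = E] E by blast
  have card_Nf: "real (card (Nf m)) \<le> real k * 2 ^ (lam * m)" for m
  proof -
    have "real (card (Nf m)) \<le> real (k * 2 ^ (lam * m))" using Nf(2)[of m] by (simp only: of_nat_le_iff)
    then show ?thesis by simp
  qed
  have W: "12 * real k ^ 2 * 4 ^ (lam * (j0 + 1)) \<le> exp (real t * \<delta>\<^sup>2 / 2)"
    unfolding \<delta>_def by (rule jl_count_le_exp[OF \<epsilon> k t j0])
  have "2 * real (card (Nf j0)) ^ 2 * exp (- (real t / 2) * \<delta>\<^sup>2)
        \<le> 2 * (real k * 2 ^ (lam * j0))\<^sup>2 * exp (- (real t / 2) * \<delta>\<^sup>2)"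
    using card_Nf[of j0] by (intro mult_right_mono mult_left_mono power_mono) auto
  also have "\<dots> \<le> 1 / 6" using k by (intro jl_net_failure_le W) auto
  finally have net: "2 * real (card (Nf j0)) ^ 2 * exp (- (real t / 2) * \<delta>\<^sup>2) \<le> 1 / 6" .
  have "real (card (E i)) \<le> real k * 2 ^ (lam * (j0 + i + 1))" for i
    using card_image_le[of "{y \<in> Nf (j0 + i + 1). y \<noteq> par (j0 + i) y}" "\<lambda>y. (y, par (j0 + i) y)"]
      card_mono[of "Nf (j0 + i + 1)" "{y \<in> Nf (j0 + i + 1). y \<noteq> par (j0 + i) y}"]
      finite_subset[OF Nf(1) P(1)] card_Nf[of "j0 + i + 1"]
    unfolding E_def by force
  then have "(\<Sum>i<L. real (card (E i)) * exp (- (real t / 2) * (1 + real i)\<^sup>2))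
             \<le> (\<Sum>i<L. real k * 2 ^ (lam * (j0 + i + 1)) * exp (- (real t / 2) * (1 + real i)\<^sup>2))"
    by (intro sum_mono mult_right_mono) auto
  also have "\<dots> \<le> 1 / 6"
  proof (rule jl_chain_failure_le)
    have "exp (real t * \<delta>\<^sup>2 / 2) \<le> exp (real t / 2)"
      using \<delta> by (simp add: power_le_one mult_left_le)
    then show "12 * real k ^ 2 * 4 ^ (lam * (j0 + 1)) \<le> exp (real t / 2)" using W by linarith
  qed (use k in auto)
  finally have prob: "2 / 3 \<le> measure (gauss_jl t d) A" using A(2) net by linarith
  have links: "ldist (jl_apply t d G y) (jl_apply t d G (par (j0 + i) y)) \<le> (2 + real i) * ldist y (par (j0 + i) y)"
    if "G \<in> A" "i < L" "y \<in> Nf (j0 + i + 1)" for G i y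
  proof (cases "y = par (j0 + i) y")
    case False
    then have "(y, par (j0 + i) y) \<in> E i" using that(3) unfolding E_def by blast
    from good(3)[OF that(1,2) this] show ?thesis by simp
  qed (metis ldist_self mult_zero_right order_refl)
  show ?thesis
  proof (rule that[OF A(1) prob good(1)])
    fix G c c' assume "G \<in> A" "c \<in> Nf j0" "c' \<in> Nf j0" "c \<noteq> c'"
    then show "(1 - \<epsilon> / 128) * ldist c c' \<le> ldist (jl_apply t d G c) (jl_apply t d G c') \<and>
      ldist (jl_apply t d G c) (jl_apply t d G c') \<le> (1 + \<epsilon> / 128) * ldist c c'"
      using good(2) unfolding \<delta>_def by blast
  qed (auto intro: links)
qed

lemma jl_diversity_preserved:
  fixes \<epsilon> :: real and d lam k t :: nat and P :: "real list set"
  assumes \<epsilon>: "0 < \<epsilon>" "\<epsilon> < 1" and k: "2 \<le> k"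
    and t_def: "t = nat \<lceil>2 ^ 20 * \<epsilon> powr (-2) * (real lam * ln (2 / \<epsilon>) + ln (real k))\<rceil>"
    and P: "finite P" "P \<subseteq> {x. length x = d}" "k \<le> card P" and lam: "ddim d P = lam"
  shows "\<exists>A\<in>sets (gauss_jl t d). 2 / 3 \<le> measure (gauss_jl t d) A \<and>
           (\<forall>G\<in>A. \<forall>l F mx. property_P k l F \<longrightarrow>
              (\<forall>S. S \<subseteq> P \<and> card S = k \<and>
                   div_opt k mx F (jl_apply t d G ` P) / (1 + \<epsilon>) \<le> div_val mx F (jl_apply t d G ` S)
                   \<longrightarrow> div_opt k mx F P / (1 + 2 * \<epsilon>) \<le> div_val mx F S))"
proof -
  have "\<epsilon> powr (-2) = 1 / \<epsilon>\<^sup>2" using \<epsilon> by (simp add: powr_minus_divide powr_numeral)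
  then have t: "2 ^ 20 / \<epsilon>\<^sup>2 * (real lam * ln (2 / \<epsilon>) + ln (real k)) \<le> real t"
    using real_nat_ceiling_ge unfolding t_def by simp
  obtain r Ss Z where r: "0 < r" and Ss: "Ss \<subseteq> P" "card Ss = k" "\<forall>x\<in>Ss. \<forall>y\<in>Ss. x \<noteq> y \<longrightarrow> r \<le> ldist x y"
    and Z: "Z \<subseteq> P" "card Z < k" "\<forall>x\<in>P. \<exists>z\<in>Z. ldist z x \<le> r"
    by (rule packing_radius[OF P(1,2) k P(3)])
  have "doubling_cover d lam P" using doubling_cover_ddim[OF P(1,2)] lam by simp
  then obtain Nf par where Nf: "\<And>m. Nf m \<subseteq> P" "\<And>m. card (Nf m) \<le> card Z * 2 ^ (lam * m)"
    and par: "\<And>m y. y \<in> P \<Longrightarrow> par m y \<in> Nf m \<and> ldist (par m y) y \<le> 2 * r / 2 ^ m"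
    using doubling_net_hierarchy[OF _ P(2) r finite_subset[OF Z(1) P(1)] Z(1) Z(3)] by blast
  have card_Nf: "card (Nf m) \<le> k * 2 ^ (lam * m)" for m
    using Nf(2)[of m] Z(2) by (meson le_trans less_imp_le mult_le_mono1)
  have "1 \<le> 9216 / \<epsilon>" using \<epsilon> by simp
  then obtain j0 :: nat where j0: "9216 / \<epsilon> \<le> 2 ^ j0" "real j0 \<le> log 2 (9216 / \<epsilon>) + 1"
    by (rule pow2_ceiling_log)
  have sep: "0 < separation P" using separation_pos[OF P(1) _ P(2)] k P(3) by linarith
  obtain L where "2 * r / separation P < 2 ^ L" using real_arch_pow[of 2 "2 * r / separation P"] by auto
  then have "2 * r / 2 ^ L < separation P"
    using sep by (simp add: divide_less_eq mult.commute)
  moreover have "2 * r / 2 ^ (j0 + L) \<le> 2 * r / 2 ^ L"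
    using r by (intro divide_left_mono power_increasing) auto
  ultimately have fine: "2 * r / 2 ^ (j0 + L) < separation P" by linarith
  have top: "Nf (j0 + L) = P"
    using par fine by (intro fine_net_eq[OF P(1,2) _ Nf(1)]) (use k P(3) in \<open>force+\<close>)
  obtain A where A: "A \<in> sets (gauss_jl t d)" "2 / 3 \<le> measure (gauss_jl t d) A"
    and inj: "\<And>G. G \<in> A \<Longrightarrow> inj_on (jl_apply t d G) P"
    and net: "\<And>G c c'. G \<in> A \<Longrightarrow> c \<in> Nf j0 \<Longrightarrow> c' \<in> Nf j0 \<Longrightarrow> c \<noteq> c' \<Longrightarrow>
       (1 - \<epsilon> / 128) * ldist c c' \<le> ldist (jl_apply t d G c) (jl_apply t d G c') \<and>
       ldist (jl_apply t d G c) (jl_apply t d G c') \<le> (1 + \<epsilon> / 128) * ldist c c'"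
    and links: "\<And>G i y. G \<in> A \<Longrightarrow> i < L \<Longrightarrow> y \<in> Nf (j0 + i + 1) \<Longrightarrow>
       ldist (jl_apply t d G y) (jl_apply t d G (par (j0 + i) y)) \<le> (2 + real i) * ldist y (par (j0 + i) y)"
    using jl_hierarchy_good_event[OF \<epsilon> k t P(1,2), of Nf par j0 L] Nf(1) card_Nf par j0(2) by blast
  have scale: "72 * r / 2 ^ j0 \<le> \<epsilon> / 128 * r"
    using j0(1) r \<epsilon> by (simp add: divide_le_eq field_simps)
  show ?thesis
  proof (intro bexI[OF _ A(1)] conjI A(2) ballI allI impI)
    fix G l F mx S
    assume G: "G \<in> A" and F: "property_P k l F"
      and S: "S \<subseteq> P \<and> card S = k \<and>
              div_opt k mx F (jl_apply t d G ` P) / (1 + \<epsilon>) \<le> div_val mx F (jl_apply t d G ` S)"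
    have \<delta>: "0 \<le> \<epsilon> / 128" "\<epsilon> / 128 \<le> 1" using \<epsilon> by auto
    note near = near_isometry_from_hierarchy[where g = "jl_apply t d G", OF P(2) length_jl_apply Nf(1) par top
        links[OF G] net[OF G] less_imp_le[OF r] \<delta> scale]
    show "div_opt k mx F P / (1 + 2 * \<epsilon>) \<le> div_val mx F S"
    proof (rule div_opt_approx_of_near_isometry[OF F P(1,3) inj[OF G] refl \<epsilon> r Ss(1,2)])
      show "r \<le> ldist x y" if "x \<in> Ss" "y \<in> Ss" "x \<noteq> y" for x y using Ss(3) that by blast
      show "ldist (jl_apply t d G x) (jl_apply t d G y) \<le> (1 + \<epsilon> / 128) * ldist x y + \<epsilon> / 128 * r"
        if "x \<in> P" "y \<in> P" for x y by (rule near(1)) (use that in simp_all)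
      show "(1 - \<epsilon> / 128) * ldist x y - \<epsilon> / 128 * r \<le> ldist (jl_apply t d G x) (jl_apply t d G y)"
        if "x \<in> P" "y \<in> P" for x y by (rule near(2)) (use that in simp_all)
    qed (use S in auto)
  qed
qed

theorem mainTheorem8:
  shows "\<exists>C C' :: real. C > 0 \<and> C' > 0 \<and>
    (\<forall>(\<epsilon>::real) (d::nat) (lam::nat) (k::nat). 0 < \<epsilon> \<and> \<epsilon> < 1 \<and> k \<ge> 2 \<longrightarrow>
      (let t = nat \<lceil>C * \<epsilon> powr (-2) * (real lam * ln (2 / \<epsilon>) + ln (real k))\<rceil> in
       \<forall>P. finite P \<and> P \<subseteq> {x. length x = d} \<and> card P \<ge> k \<and> ddim d P = lam \<longrightarrow>
         (\<exists>A \<in> sets (gauss_jl t d). measure (gauss_jl t d) A \<ge> 2 / 3 \<and>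
            (\<forall>G\<in>A. \<forall>l F mx. property_P k l F \<longrightarrow>
               (\<forall>S. S \<subseteq> P \<and> card S = k \<and>
                    div_val mx F (jl_apply t d G ` S) \<ge> div_opt k mx F (jl_apply t d G ` P) / (1 + \<epsilon>)
                    \<longrightarrow> div_val mx F S \<ge> div_opt k mx F P / (1 + C' * \<epsilon>))))))"
  unfolding Let_def
  by (intro exI[of _ "2 ^ 20"] exI[of _ 2] conjI allI impI jl_diversity_preserved) auto

end
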